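(* Let $\mathcal{U} = \mathbb{T}^p\times B^q$ with coordinates $(\theta_1\bmod 1,\dots,\theta_p\bmod1, r_1,\dots,r_q)$, $B^q$ a ball in $\mathbb{R}^q$, and let $Z = \sum_{i=1}^p a_i(r_1,\dots,r_q)\partial_{\theta_i}$ with smooth functions $a_i$. Assume $a_1,\dots,a_p$ are incommensurable: there is no nonzero $(k_1,\dots,k_p)\in\mathbb{Z}^p$ such that $\sum_i k_i a_i(r) = 0$ on an open subset. Let $\Lambda$ be a linear differential operator on $\mathcal{U}$ with $Z\circ\Lambda - \Lambda\circ Z = 0$. Then $\Lambda$ is invariant under the natural free $\mathbb{T}^p$-action on $\mathcal{U}$ by translations in $\theta$; equivalently, when written as $\Lambda = \sum_{I,J} C_{I,J}(\theta,r)\,\partial_\theta^I\partial_r^J$, all coefficients $C_{I,J}$ are independent of $\theta$.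
   Context: Multi-index notation: $\partial_\theta^I = \partial_{\theta_1}^{i_1}\cdots\partial_{\theta_p}^{i_p}$ for $I=(i_1,\dots,i_p)$, similarly $\partial_r^J$. *)

theory Defs
  imports "HOL-Analysis.Analysis"
begin

definition dirderiv :: "'a::real_normed_vector \<Rightarrow> ('a \<Rightarrow> real) \<Rightarrow> 'a \<Rightarrow> real" where
  "dirderiv v g x = deriv (\<lambda>t. g (x + t *\<^sub>R v)) 0"

fun iterdir :: "'a::real_normed_vector list \<Rightarrow> ('a \<Rightarrow> real) \<Rightarrow> 'a \<Rightarrow> real" where
  "iterdir [] g = g"
| "iterdir (v # vs) g = dirderiv v (iterdir vs g)"

definition smooth_on :: "'a::euclidean_space set \<Rightarrow> ('a \<Rightarrow> real) \<Rightarrow> bool" where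
  "smooth_on S g \<longleftrightarrow> (\<forall>ds. iterdir ds g differentiable_on S)"

text \<open>Points of T^p x B^q are represented as (theta, r) with theta in R^p; functions on the torus
  are the functions 1-periodic in every theta-coordinate.\<close>
definition theta_periodic :: "((real, 'p::finite) vec \<times> (real, 'q::finite) vec \<Rightarrow> real) \<Rightarrow> bool" where
  "theta_periodic g \<longleftrightarrow> (\<forall>i \<theta> r. g (\<theta> + axis i 1, r) = g (\<theta>, r))"

definition theta_dirs :: "('p::{finite,linorder} \<Rightarrow> nat) \<Rightarrow> ((real, 'p) vec \<times> (real, 'q::finite) vec) list" where
  "theta_dirs I = concat (map (\<lambda>i. replicate (I i) (axis i 1, 0)) (sorted_list_of_set UNIV))"

definition r_dirs :: "('q::{finite,linorder} \<Rightarrow> nat) \<Rightarrow> ((real, 'p::finite) vec \<times> (real, 'q) vec) list" where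
  "r_dirs J = concat (map (\<lambda>j. replicate (J j) (0, axis j 1)) (sorted_list_of_set UNIV))"

definition partial_IJ ::
  "('p::{finite,linorder} \<Rightarrow> nat) \<Rightarrow> ('q::{finite,linorder} \<Rightarrow> nat)
    \<Rightarrow> ((real, 'p) vec \<times> (real, 'q) vec \<Rightarrow> real) \<Rightarrow> (real, 'p) vec \<times> (real, 'q) vec \<Rightarrow> real" where
  "partial_IJ I J g = iterdir (theta_dirs I @ r_dirs J) g"

definition Zop :: "('p::finite \<Rightarrow> (real, 'q::finite) vec \<Rightarrow> real) \<Rightarrow> ((real, 'p) vec \<times> (real, 'q) vec \<Rightarrow> real)
    \<Rightarrow> (real, 'p) vec \<times> (real, 'q) vec \<Rightarrow> real" where
  "Zop a g = (\<lambda>(\<theta>, r). \<Sum>i\<in>UNIV. a i r * dirderiv (axis i 1, 0) g (\<theta>, r))"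

definition Lop :: "(('p::{finite,linorder} \<Rightarrow> nat) \<times> ('q::{finite,linorder} \<Rightarrow> nat)) set
    \<Rightarrow> (('p \<Rightarrow> nat) \<times> ('q \<Rightarrow> nat) \<Rightarrow> (real, 'p) vec \<times> (real, 'q) vec \<Rightarrow> real)
    \<Rightarrow> ((real, 'p) vec \<times> (real, 'q) vec \<Rightarrow> real) \<Rightarrow> (real, 'p) vec \<times> (real, 'q) vec \<Rightarrow> real" where
  "Lop S C g = (\<lambda>x. \<Sum>(I, J)\<in>S. C (I, J) x * partial_IJ I J g x)"

definition incommensurable :: "('p::finite \<Rightarrow> (real, 'q::finite) vec \<Rightarrow> real) \<Rightarrow> (real, 'q) vec set \<Rightarrow> bool" where
  "incommensurable a B \<longleftrightarrow>
     \<not> (\<exists>k :: 'p \<Rightarrow> int. (\<exists>i. k i \<noteq> 0) \<and>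
          (\<exists>V. open V \<and> V \<noteq> {} \<and> V \<subseteq> B \<and> (\<forall>r\<in>V. (\<Sum>i\<in>UNIV. of_int (k i) * a i r) = 0)))"

end

theory Submission
  imports Defs "HOL-Computational_Algebra.Polynomial"
begin

text \<open>
  Write \<open>\<Lambda> = \<Sum> C\<^sub>I\<^sub>J \<partial>\<^sub>\<theta>\<^sup>I \<partial>\<^sub>r\<^sup>J\<close> and argue by downward induction on the \<open>r\<close>-multi-index \<open>K\<close>.
  Apply \<open>Z \<Lambda> = \<Lambda> Z\<close> to \<open>cos (w \<bullet> \<theta> + \<alpha>) (r - r\<^sub>0)\<^sup>K\<close> with \<open>w \<in> 2\<pi>\<int>\<^sup>p\<close> and evaluate at
  \<open>r = r\<^sub>0\<close>: the coefficients with \<open>J\<close> not above \<open>K\<close> drop out and those with \<open>J > K\<close> are already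
  \<open>\<theta>\<close>-independent, so after absorbing \<open>w \<bullet> \<theta>\<close> into \<open>\<alpha>\<close> one is left with an identity between
  trigonometric polynomials in \<open>w\<close> whose coefficients are the \<open>Z C\<^sub>I\<^sub>K (\<theta>, r\<^sub>0)\<close>.
  Comparing coefficients shows that \<open>Z C\<^sub>I\<^sub>K\<close> does not depend on \<open>\<theta>\<close>; a constant derivative
  along the flow of \<open>Z\<close> must vanish for a bounded periodic function, so \<open>Z C\<^sub>I\<^sub>K = 0\<close>.
  Thus \<open>C\<^sub>I\<^sub>K\<close> is constant along the linear flow on the torus with frequency vector \<open>a(r)\<close>.
  By Baire and incommensurability the frequencies are rationally independent for a dense
  set of \<open>r\<close>, where Kronecker's theorem makes the flow dense; continuity in \<open>r\<close> does the rest.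
\<close>

section \<open>Directional derivatives and smooth functions\<close>

lemma line_has_real_derivative:
  fixes f :: "'a::euclidean_space \<Rightarrow> real"
  assumes "(f has_derivative f') (at (x + s *\<^sub>R v))"
  shows "((\<lambda>t. f (x + t *\<^sub>R v)) has_real_derivative f' v) (at s)"
proof -
  have "((\<lambda>t. x + t *\<^sub>R v) has_derivative (\<lambda>t. t *\<^sub>R v)) (at s)"
    by (auto intro!: derivative_eq_intros)
  from has_derivative_compose[OF this assms]
  have "((\<lambda>t. f (x + t *\<^sub>R v)) has_derivative (\<lambda>t. f' (t *\<^sub>R v))) (at s)"
    by (simp add: o_def)
  moreover have "(\<lambda>t. f' (t *\<^sub>R v)) = (\<lambda>t. f' v * t)"
    using has_derivative_linear[OF assms] by (auto simp: linear_scale)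
  ultimately show ?thesis by (simp add: has_field_derivative_def)
qed

lemma dirderiv_eq_derivative:
  fixes f :: "'a::euclidean_space \<Rightarrow> real"
  assumes "(f has_derivative f') (at x)"
  shows "dirderiv v f x = f' v"
  unfolding dirderiv_def
  by (rule DERIV_imp_deriv, rule line_has_real_derivative) (use assms in simp)

lemma line_has_real_derivative_dirderiv:
  fixes f :: "'a::euclidean_space \<Rightarrow> real"
  assumes "f differentiable (at (x + s *\<^sub>R v))"
  shows "((\<lambda>t. f (x + t *\<^sub>R v)) has_real_derivative dirderiv v f (x + s *\<^sub>R v)) (at s)"
proof -
  obtain f' where "(f has_derivative f') (at (x + s *\<^sub>R v))"
    using assms by (auto simp: differentiable_def)
  then show ?thesis using line_has_real_derivative dirderiv_eq_derivative by metis
qed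

lemma line_has_real_derivative_dirderiv_0:
  fixes f :: "'a::euclidean_space \<Rightarrow> real"
  assumes "f differentiable (at x)"
  shows "((\<lambda>t. f (x + t *\<^sub>R v)) has_real_derivative dirderiv v f x) (at 0)"
  using line_has_real_derivative_dirderiv[of f x 0 v] assms by simp

lemma eventually_line_in_open:
  fixes x v :: "'a::euclidean_space"
  assumes "open U" "x \<in> U"
  shows "eventually (\<lambda>t::real. x + t *\<^sub>R v \<in> U) (nhds 0)"
proof -
  have "open ((\<lambda>t::real. x + t *\<^sub>R v) -` U)"
    by (rule open_vimage[OF assms(1)]) (auto intro!: continuous_intros)
  then show ?thesis
    using assms(2) unfolding eventually_nhds by (intro exI[of _ "(\<lambda>t. x + t *\<^sub>R v) -` U"]) auto
qed

lemma dirderiv_cong_open: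
  fixes f g :: "'a::euclidean_space \<Rightarrow> real"
  assumes "open U" "x \<in> U" "\<And>y. y \<in> U \<Longrightarrow> f y = g y"
  shows "dirderiv v f x = dirderiv v g x"
  unfolding dirderiv_def
  by (rule deriv_cong_ev[OF _ refl], rule eventually_mono[OF eventually_line_in_open[OF assms(1,2)]])
     (use assms in auto)

lemma iterdir_cong_open:
  fixes f g :: "'a::euclidean_space \<Rightarrow> real"
  assumes "open U" "\<And>y. y \<in> U \<Longrightarrow> f y = g y" "x \<in> U"
  shows "iterdir ds f x = iterdir ds g x"
  using assms(3)
proof (induction ds arbitrary: x)
  case Nil then show ?case using assms by simp
next
  case (Cons v ds) then show ?case
    using dirderiv_cong_open[OF assms(1) Cons.prems, of "iterdir ds f" "iterdir ds g" v] by simp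
qed

lemma iterdir_append: "iterdir (xs @ ys) f = iterdir xs (iterdir ys f)"
  by (induction xs) auto

lemma iterdir_const: "\<exists>c'. iterdir ds (\<lambda>_. c) = (\<lambda>_. c')"
  by (induction ds) (auto simp: dirderiv_def)

lemma dirderiv_add:
  fixes f g :: "'a::euclidean_space \<Rightarrow> real"
  assumes "f differentiable (at x)" "g differentiable (at x)"
  shows "dirderiv v (\<lambda>y. f y + g y) x = dirderiv v f x + dirderiv v g x"
proof -
  obtain f' g' where f': "(f has_derivative f') (at x)" and g': "(g has_derivative g') (at x)"
    using assms by (auto simp: differentiable_def)
  show ?thesis
    using dirderiv_eq_derivative[OF has_derivative_add[OF f' g']]
      dirderiv_eq_derivative[OF f'] dirderiv_eq_derivative[OF g'] by simp
qed

lemma dirderiv_mult: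
  fixes f g :: "'a::euclidean_space \<Rightarrow> real"
  assumes "f differentiable (at x)" "g differentiable (at x)"
  shows "dirderiv v (\<lambda>y. f y * g y) x = dirderiv v f x * g x + f x * dirderiv v g x"
proof -
  obtain f' g' where f': "(f has_derivative f') (at x)" and g': "(g has_derivative g') (at x)"
    using assms by (auto simp: differentiable_def)
  show ?thesis
    using dirderiv_eq_derivative[OF has_derivative_mult[OF f' g']]
      dirderiv_eq_derivative[OF f'] dirderiv_eq_derivative[OF g'] by simp
qed

lemma dirderiv_sum:
  fixes F :: "'i \<Rightarrow> 'a::euclidean_space \<Rightarrow> real"
  assumes "finite A" "\<And>i. i \<in> A \<Longrightarrow> F i differentiable (at x)"
  shows "dirderiv v (\<lambda>y. \<Sum>i\<in>A. F i y) x = (\<Sum>i\<in>A. dirderiv v (F i) x)"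
  using assms
proof (induction A rule: finite_induct)
  case (insert a A)
  then show ?case
    by (simp add: dirderiv_add differentiable_sum)
qed (simp add: dirderiv_def)

lemma differentiable_sum_list:
  fixes F :: "'i \<Rightarrow> 'a::real_normed_vector \<Rightarrow> real"
  assumes "\<And>i. i \<in> set xs \<Longrightarrow> F i differentiable (at x)"
  shows "(\<lambda>y. \<Sum>i\<leftarrow>xs. F i y) differentiable (at x)"
  using assms by (induction xs) auto

lemma dirderiv_sum_list:
  fixes F :: "'i \<Rightarrow> 'a::euclidean_space \<Rightarrow> real"
  assumes "\<And>i. i \<in> set xs \<Longrightarrow> F i differentiable (at x)"
  shows "dirderiv v (\<lambda>y. \<Sum>i\<leftarrow>xs. F i y) x = (\<Sum>i\<leftarrow>xs. dirderiv v (F i) x)"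
  using assms
proof (induction xs)
  case (Cons a xs)
  then show ?case
    by (simp add: dirderiv_add differentiable_sum_list)
qed (simp add: dirderiv_def)

lemma smooth_on_iterdir_differentiable:
  assumes "smooth_on U f" "open U" "x \<in> U"
  shows "iterdir ds f differentiable (at x)"
  using assms by (auto simp: smooth_on_def differentiable_on_eq_differentiable_at)

lemma smooth_onI:
  assumes "open U" "\<And>ds x. x \<in> U \<Longrightarrow> iterdir ds f differentiable (at x)"
  shows "smooth_on U f"
  using assms by (auto simp: smooth_on_def differentiable_on_eq_differentiable_at)

lemma smooth_on_imp_differentiable:
  assumes "smooth_on U f" "open U" "x \<in> U"
  shows "f differentiable (at x)"
  using smooth_on_iterdir_differentiable[OF assms, of "[]"] by simp

lemma smooth_on_imp_continuous_on: "smooth_on U f \<Longrightarrow> continuous_on U f"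
  unfolding smooth_on_def by (metis differentiable_imp_continuous_on iterdir.simps(1))

lemma smooth_on_iterdir: "smooth_on U f \<Longrightarrow> smooth_on U (iterdir ds f)"
  by (auto simp: smooth_on_def iterdir_append[symmetric])

lemma smooth_on_subset: "smooth_on U f \<Longrightarrow> V \<subseteq> U \<Longrightarrow> smooth_on V f"
  by (auto simp: smooth_on_def intro: differentiable_on_subset)

lemma smooth_on_const: "smooth_on U (\<lambda>_. c)"
  unfolding smooth_on_def
proof
  fix ds :: "'a list"
  obtain c' where "iterdir ds (\<lambda>_. c) = (\<lambda>_. c')" using iterdir_const by blast
  then show "iterdir ds (\<lambda>_. c) differentiable_on U" by simp
qed

lemma differentiable_cong_open:
  assumes "g differentiable (at x)" "open U" "x \<in> U" "\<And>y. y \<in> U \<Longrightarrow> g y = f y"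
  shows "f differentiable (at x)"
  using assms has_derivative_transform_within_open unfolding differentiable_def by blast

fun splits :: "'a list \<Rightarrow> ('a list \<times> 'a list) list" where
  "splits [] = [([], [])]"
| "splits (v # ds) = concat (map (\<lambda>(l, r). [(v # l, r), (l, v # r)]) (splits ds))"

lemma sum_list_map_concat:
  "sum_list (map f (concat xss)) = sum_list (map (\<lambda>xs. sum_list (map f xs)) xss)"
  by (induction xss) auto

lemma iterdir_mult:
  fixes f g :: "'a::euclidean_space \<Rightarrow> real"
  assumes "open U" "smooth_on U f" "smooth_on U g" "x \<in> U"
  shows "iterdir ds (\<lambda>y. f y * g y) x = (\<Sum>(l, r)\<leftarrow>splits ds. iterdir l f x * iterdir r g x)"
  using assms(4)
proof (induction ds arbitrary: x)
  case Nil then show ?case by simp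
next
  case (Cons v ds)
  note diff = smooth_on_iterdir_differentiable[OF assms(2) assms(1) Cons.prems]
    smooth_on_iterdir_differentiable[OF assms(3) assms(1) Cons.prems]
  have "iterdir (v # ds) (\<lambda>y. f y * g y) x
      = dirderiv v (\<lambda>y. \<Sum>p\<leftarrow>splits ds. iterdir (fst p) f y * iterdir (snd p) g y) x"
    using dirderiv_cong_open[OF assms(1) Cons.prems, of "iterdir ds (\<lambda>y. f y * g y)"] Cons.IH
    by (simp add: split_def)
  also have "\<dots> = (\<Sum>p\<leftarrow>splits ds. iterdir (v # fst p) f x * iterdir (snd p) g x
                     + iterdir (fst p) f x * iterdir (v # snd p) g x)"
    by (simp add: dirderiv_sum_list dirderiv_mult diff differentiable_mult)
  also have "\<dots> = (\<Sum>(l, r)\<leftarrow>splits (v # ds). iterdir l f x * iterdir r g x)"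
    by (simp add: sum_list_map_concat o_def split_def)
  finally show ?case .
qed

lemma smooth_on_mult:
  fixes f g :: "'a::euclidean_space \<Rightarrow> real"
  assumes "open U" "smooth_on U f" "smooth_on U g"
  shows "smooth_on U (\<lambda>y. f y * g y)"
proof (rule smooth_onI[OF assms(1)])
  fix ds x assume x: "x \<in> U"
  have "(\<lambda>y. \<Sum>(l, r)\<leftarrow>splits ds. iterdir l f y * iterdir r g y) differentiable (at x)"
    unfolding split_def
    by (intro differentiable_sum_list differentiable_mult
        smooth_on_iterdir_differentiable[OF assms(2) assms(1) x]
        smooth_on_iterdir_differentiable[OF assms(3) assms(1) x])
  then show "iterdir ds (\<lambda>y. f y * g y) differentiable (at x)"
    by (rule differentiable_cong_open[OF _ assms(1) x]) (use iterdir_mult[OF assms] in auto)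
qed

lemma smooth_on_prod:
  fixes F :: "'i \<Rightarrow> 'a::euclidean_space \<Rightarrow> real"
  assumes "open U" "finite A" "\<And>i. i \<in> A \<Longrightarrow> smooth_on U (F i)"
  shows "smooth_on U (\<lambda>y. \<Prod>i\<in>A. F i y)"
  using assms(2,3)
  by (induction A rule: finite_induct) (auto simp: smooth_on_const intro!: smooth_on_mult[OF assms(1)])

lemma splits_mset: "p \<in> set (splits ds) \<Longrightarrow> mset (fst p) + mset (snd p) = mset ds"
  by (induction ds arbitrary: p) auto

lemma splits_set:
  assumes "p \<in> set (splits ds)"
  shows "set (fst p) \<subseteq> set ds" "set (snd p) \<subseteq> set ds"
  using arg_cong[OF splits_mset[OF assms], of set_mset] by auto

lemma filter_splits_fst_Nil: "filter (\<lambda>p. fst p = []) (splits ds) = [([], ds)]"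
proof (induction ds)
  case (Cons v ds)
  have "filter (\<lambda>p. fst p = []) (concat (map (\<lambda>(l, r). [(v # l, r), (l, v # r)]) xs))
      = map (\<lambda>(l, r). (l, v # r)) (filter (\<lambda>p. fst p = []) xs)" for xs :: "('a list \<times> 'a list) list"
    by (induction xs) auto
  then show ?case using Cons by simp
qed simp

lemma iterdir_fst:
  fixes f :: "'a::euclidean_space \<Rightarrow> real"
  shows "iterdir ds (\<lambda>y::'a \<times> 'b::euclidean_space. f (fst y)) = (\<lambda>y. iterdir (map fst ds) f (fst y))"
  by (induction ds) (simp_all add: dirderiv_def[abs_def])

lemma iterdir_snd:
  fixes f :: "'b::euclidean_space \<Rightarrow> real"
  shows "iterdir ds (\<lambda>y::'a::euclidean_space \<times> 'b. f (snd y)) = (\<lambda>y. iterdir (map snd ds) f (snd y))"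
  by (induction ds) (simp_all add: dirderiv_def[abs_def])

lemma differentiable_at_Pair_left:
  assumes "F differentiable (at (x, y))"
  shows "(\<lambda>x. F (x, y)) differentiable (at x)"
proof (rule differentiable_compose[of F "\<lambda>x. (x, y)", OF assms])
  show "(\<lambda>x. (x, y)) differentiable (at x)"
    by (intro differentiable_Pair differentiable_ident differentiable_const)
qed

lemma smooth_on_fst:
  fixes f :: "'a::euclidean_space \<Rightarrow> real"
  assumes "smooth_on UNIV f"
  shows "smooth_on (UNIV::('a \<times> 'b::euclidean_space) set) (\<lambda>y. f (fst y))"
proof (rule smooth_onI)
  fix ds :: "('a \<times> 'b) list" and x :: "'a \<times> 'b"
  have "iterdir (map fst ds) f differentiable (at (fst x))"
    using smooth_on_iterdir_differentiable[OF assms] by auto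
  then show "iterdir ds (\<lambda>y. f (fst y)) differentiable (at x)"
    unfolding iterdir_fst
    by (rule differentiable_compose[OF _ bounded_linear_imp_differentiable[OF bounded_linear_fst]])
qed simp

lemma smooth_on_snd:
  fixes f :: "'b::euclidean_space \<Rightarrow> real"
  assumes "smooth_on B f" "open B"
  shows "smooth_on ((UNIV::'a::euclidean_space set) \<times> B) (\<lambda>y. f (snd y))"
proof (rule smooth_onI)
  fix ds :: "('a \<times> 'b) list" and x :: "'a \<times> 'b" assume x: "x \<in> UNIV \<times> B"
  have "iterdir (map snd ds) f differentiable (at (snd x))"
    using smooth_on_iterdir_differentiable[OF assms] x by auto
  then show "iterdir ds (\<lambda>y. f (snd y)) differentiable (at x)"
    unfolding iterdir_snd
    by (rule differentiable_compose[OF _ bounded_linear_imp_differentiable[OF bounded_linear_snd]])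
qed (use assms in \<open>auto intro: open_Times\<close>)

lemma smooth_on_tensor:
  fixes \<phi> :: "'a::euclidean_space \<Rightarrow> real" and h :: "'b::euclidean_space \<Rightarrow> real"
  assumes "open B" "smooth_on UNIV \<phi>" "smooth_on B h"
  shows "smooth_on (UNIV \<times> B) (\<lambda>y. \<phi> (fst y) * h (snd y))"
  by (rule smooth_on_mult[OF open_Times[OF open_UNIV assms(1)]
        smooth_on_subset[OF smooth_on_fst[OF assms(2)]] smooth_on_snd[OF assms(3,1)]]) auto

lemma dirderiv_fst_tensor:
  fixes \<phi> :: "'a::euclidean_space \<Rightarrow> real" and h :: "'b::euclidean_space \<Rightarrow> real"
  assumes "\<phi> differentiable (at x)"
  shows "dirderiv (v, 0) (\<lambda>y. \<phi> (fst y) * h (snd y)) (x, r) = dirderiv v \<phi> x * h r"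
  unfolding dirderiv_def[of "(v, 0)"]
  by (rule DERIV_imp_deriv) (simp add: DERIV_cmult_right line_has_real_derivative_dirderiv_0[OF assms])

lemma iterdir_fst_tensor_sum:
  fixes \<phi> :: "'i \<Rightarrow> 'a::euclidean_space \<Rightarrow> real" and h :: "'i \<Rightarrow> 'b::euclidean_space \<Rightarrow> real"
  assumes "finite A" "\<And>i. i \<in> A \<Longrightarrow> smooth_on UNIV (\<phi> i)"
  shows "iterdir (map (\<lambda>v. (v, 0)) xs) (\<lambda>y. \<Sum>i\<in>A. \<phi> i (fst y) * h i (snd y))
       = (\<lambda>y. \<Sum>i\<in>A. iterdir xs (\<phi> i) (fst y) * h i (snd y))"
proof (induction xs)
  case (Cons v xs)
  have "dirderiv (v, 0) (\<lambda>y. \<Sum>i\<in>A. iterdir xs (\<phi> i) (fst y) * h i (snd y)) (x, r)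
      = (\<Sum>i\<in>A. dirderiv v (iterdir xs (\<phi> i)) x * h i r)" for x r
    unfolding dirderiv_def[of "(v, 0)"]
    by (rule DERIV_imp_deriv, simp, intro DERIV_sum DERIV_cmult_right line_has_real_derivative_dirderiv_0
        smooth_on_iterdir_differentiable[OF assms(2)]) simp_all
  then show ?case using Cons by (auto intro!: ext)
qed simp

lemma iterdir_snd_tensor_sum:
  fixes \<phi> :: "'i \<Rightarrow> 'a::euclidean_space \<Rightarrow> real" and h :: "'i \<Rightarrow> 'b::euclidean_space \<Rightarrow> real"
  assumes "open B" "\<And>i. i \<in> A \<Longrightarrow> smooth_on B (h i)" "r \<in> B"
  shows "iterdir (map (\<lambda>w. (0, w)) ys) (\<lambda>y. \<Sum>i\<in>A. \<phi> i (fst y) * h i (snd y)) (x, r)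
       = (\<Sum>i\<in>A. \<phi> i x * iterdir ys (h i) r)"
  using assms(3)
proof (induction ys arbitrary: x r)
  case (Cons w ys)
  have "iterdir (map (\<lambda>w. (0, w)) (w # ys)) (\<lambda>y. \<Sum>i\<in>A. \<phi> i (fst y) * h i (snd y)) (x, r)
      = dirderiv (0, w) (\<lambda>y. \<Sum>i\<in>A. \<phi> i (fst y) * iterdir ys (h i) (snd y)) (x, r)"
    using Cons.IH Cons.prems
    by (simp, intro dirderiv_cong_open[OF open_Times[OF open_UNIV assms(1)]]) auto
  also have "\<dots> = (\<Sum>i\<in>A. \<phi> i x * dirderiv w (iterdir ys (h i)) r)"
    unfolding dirderiv_def[of "(0, w)"]
    by (rule DERIV_imp_deriv, simp, intro DERIV_sum DERIV_cmult line_has_real_derivative_dirderiv_0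
        smooth_on_iterdir_differentiable[OF assms(2) assms(1) Cons.prems])
  finally show ?case by simp
qed simp

lemma iterdir_tensor_sum:
  fixes \<phi> :: "'i \<Rightarrow> 'a::euclidean_space \<Rightarrow> real" and h :: "'i \<Rightarrow> 'b::euclidean_space \<Rightarrow> real"
  assumes "open B" "finite A" "\<And>i. i \<in> A \<Longrightarrow> smooth_on UNIV (\<phi> i)"
    "\<And>i. i \<in> A \<Longrightarrow> smooth_on B (h i)" "r \<in> B"
  shows "iterdir (map (\<lambda>v. (v, 0)) xs @ map (\<lambda>w. (0, w)) ys) (\<lambda>y. \<Sum>i\<in>A. \<phi> i (fst y) * h i (snd y)) (x, r)
       = (\<Sum>i\<in>A. iterdir xs (\<phi> i) x * iterdir ys (h i) r)"
proof -
  have "iterdir (map (\<lambda>v. (v, 0)) xs @ map (\<lambda>w. (0, w)) ys) (\<lambda>y. \<Sum>i\<in>A. \<phi> i (fst y) * h i (snd y)) (x, r)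
     = iterdir (map (\<lambda>v. (v, 0)) xs) (\<lambda>y. \<Sum>i\<in>A. \<phi> i (fst y) * iterdir ys (h i) (snd y)) (x, r)"
    unfolding iterdir_append
    by (rule iterdir_cong_open[OF open_Times[OF open_UNIV assms(1)]])
       (use iterdir_snd_tensor_sum[OF assms(1,4)] assms(5) in auto)
  also have "\<dots> = (\<Sum>i\<in>A. iterdir xs (\<phi> i) x * iterdir ys (h i) r)"
    using iterdir_fst_tensor_sum[OF assms(2,3), where xs = xs and h = "\<lambda>i. iterdir ys (h i)"] by simp
  finally show ?thesis .
qed

definition plane_wave :: "'a::real_inner \<Rightarrow> real \<Rightarrow> 'a \<Rightarrow> real" where
  "plane_wave w \<alpha> x = cos (w \<bullet> x + \<alpha>)"

lemma plane_wave_has_derivative: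
  "((\<lambda>x. c * plane_wave w \<alpha> x) has_derivative (\<lambda>h. c * (w \<bullet> h) * plane_wave w (\<alpha> + pi / 2) x)) (at x)"
proof -
  have "plane_wave w (\<alpha> + pi / 2) x = - sin (w \<bullet> x + \<alpha>)"
    using cos_add[of "w \<bullet> x + \<alpha>" "pi / 2"] by (simp add: plane_wave_def add.assoc)
  then show ?thesis
    unfolding plane_wave_def by (auto intro!: derivative_eq_intros)
qed

lemma iterdir_plane_wave:
  fixes w :: "'a::euclidean_space"
  shows "iterdir ds (plane_wave w \<alpha>)
       = (\<lambda>x. prod_list (map ((\<bullet>) w) ds) * plane_wave w (\<alpha> + real (length ds) * (pi / 2)) x)"
proof (induction ds)
  case (Cons v ds)
  have "dirderiv v (\<lambda>x. c * plane_wave w \<beta> x) x = c * (w \<bullet> v) * plane_wave w (\<beta> + pi / 2) x"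
    for c \<beta> x
    by (rule dirderiv_eq_derivative[OF plane_wave_has_derivative])
  then show ?case by (simp add: Cons algebra_simps add_divide_distrib)
qed simp

lemma smooth_on_plane_wave:
  fixes w :: "'a::euclidean_space"
  shows "smooth_on UNIV (plane_wave w \<alpha>)"
  by (rule smooth_onI) (auto simp: iterdir_plane_wave differentiable_def intro: plane_wave_has_derivative)

definition axis_dirs :: "('i::{finite,linorder} \<Rightarrow> nat) \<Rightarrow> (real, 'i) vec list" where
  "axis_dirs I = concat (map (\<lambda>i. replicate (I i) (axis i 1)) (sorted_list_of_set UNIV))"

definition multi_power :: "(real, 'i::finite) vec \<Rightarrow> ('i \<Rightarrow> nat) \<Rightarrow> real" where
  "multi_power w I = (\<Prod>i\<in>UNIV. (w $ i) ^ I i)"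

definition multi_degree :: "('i::finite \<Rightarrow> nat) \<Rightarrow> nat" where
  "multi_degree I = (\<Sum>i\<in>UNIV. I i)"

definition axis_count :: "'i::finite \<Rightarrow> (real, 'i) vec list \<Rightarrow> nat" where
  "axis_count j ds = count (mset ds) (axis j 1)"

lemma theta_dirs_eq: "theta_dirs I = map (\<lambda>v. (v, 0)) (axis_dirs I)"
  by (simp add: theta_dirs_def axis_dirs_def map_concat o_def)

lemma r_dirs_eq: "r_dirs J = map (\<lambda>w. (0, w)) (axis_dirs J)"
  by (simp add: r_dirs_def axis_dirs_def map_concat o_def)

lemma partial_IJ_tensor_sum:
  fixes \<phi> :: "'i \<Rightarrow> (real, 'p::{finite,linorder}) vec \<Rightarrow> real"
    and h :: "'i \<Rightarrow> (real, 'q::{finite,linorder}) vec \<Rightarrow> real"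
  assumes "open B" "finite A" "\<And>i. i \<in> A \<Longrightarrow> smooth_on UNIV (\<phi> i)"
    "\<And>i. i \<in> A \<Longrightarrow> smooth_on B (h i)" "r \<in> B"
  shows "partial_IJ I J (\<lambda>y. \<Sum>i\<in>A. \<phi> i (fst y) * h i (snd y)) (\<theta>, r)
       = (\<Sum>i\<in>A. iterdir (axis_dirs I) (\<phi> i) \<theta> * iterdir (axis_dirs J) (h i) r)"
  unfolding partial_IJ_def theta_dirs_eq r_dirs_eq by (rule iterdir_tensor_sum[OF assms])

lemma partial_IJ_tensor:
  fixes \<phi> :: "(real, 'p::{finite,linorder}) vec \<Rightarrow> real" and h :: "(real, 'q::{finite,linorder}) vec \<Rightarrow> real"
  assumes "open B" "smooth_on UNIV \<phi>" "smooth_on B h" "r \<in> B"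
  shows "partial_IJ I J (\<lambda>y. \<phi> (fst y) * h (snd y)) (\<theta>, r)
       = iterdir (axis_dirs I) \<phi> \<theta> * iterdir (axis_dirs J) h r"
  using partial_IJ_tensor_sum[OF assms(1), of "{()}" "\<lambda>_. \<phi>" "\<lambda>_. h"] assms(2-4) by simp

lemma prod_list_map_concat:
  "prod_list (map f (concat xss)) = prod_list (map (\<lambda>xs. prod_list (map f xs)) xss)"
  by (induction xss) auto

lemma prod_list_inner_axis_dirs: "prod_list (map ((\<bullet>) w) (axis_dirs I)) = multi_power w I"
proof -
  have "prod_list (map ((\<bullet>) w) (axis_dirs I)) = prod_list (map (\<lambda>i. (w $ i) ^ I i) (sorted_list_of_set UNIV))"
    by (simp add: axis_dirs_def prod_list_map_concat o_def inner_axis)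
  then show ?thesis
    by (simp add: multi_power_def prod.distinct_set_conv_list[symmetric])
qed

lemma length_axis_dirs: "length (axis_dirs I) = multi_degree I"
proof -
  have "length (axis_dirs I) = sum_list (map I (sorted_list_of_set UNIV))"
    by (simp add: axis_dirs_def length_concat o_def)
  then show ?thesis
    by (simp add: multi_degree_def sum.distinct_set_conv_list[symmetric])
qed

lemma axis_count_axis_dirs: "axis_count j (axis_dirs I) = I j"
proof -
  have "count (mset (concat (map (\<lambda>i. replicate (I i) (axis i (1::real))) xs))) (axis j 1)
     = (if j \<in> set xs then I j else 0)" if "distinct xs" for xs
    using that by (induction xs) (auto simp: axis_eq_axis)
  then show ?thesis unfolding axis_count_def axis_dirs_def by simp
qed

lemma set_axis_dirs: "set (axis_dirs I) \<subseteq> range (\<lambda>j. axis j 1)"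
  by (auto simp: axis_dirs_def)

lemma iterdir_axis_dirs_plane_wave:
  "iterdir (axis_dirs I) (plane_wave w \<alpha>) \<theta>
     = multi_power w I * plane_wave w (\<alpha> + real (multi_degree I) * (pi / 2)) \<theta>"
  by (simp add: iterdir_plane_wave prod_list_inner_axis_dirs length_axis_dirs)

lemma dirderiv_iterdir_axis_dirs_plane_wave:
  "dirderiv (axis i 1) (iterdir (axis_dirs I) (plane_wave w \<alpha>)) \<theta>
     = w $ i * multi_power w I * plane_wave w (\<alpha> + real (Suc (multi_degree I)) * (pi / 2)) \<theta>"
  using iterdir_plane_wave[of "axis i 1 # axis_dirs I" w \<alpha>]
  by (simp add: prod_list_inner_axis_dirs length_axis_dirs inner_axis)

lemma iterdir_snoc_axis_dirs_plane_wave: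
  "iterdir (axis_dirs I @ [axis i 1]) (plane_wave w \<alpha>) \<theta>
     = w $ i * multi_power w I * plane_wave w (\<alpha> + real (Suc (multi_degree I)) * (pi / 2)) \<theta>"
  by (simp add: iterdir_plane_wave prod_list_inner_axis_dirs length_axis_dirs inner_axis)

section \<open>Derivatives of centered monomials\<close>

definition centered_monomial :: "('i::finite \<Rightarrow> nat) \<Rightarrow> (real, 'i) vec \<Rightarrow> (real, 'i) vec \<Rightarrow> real" where
  "centered_monomial K c r = (\<Prod>j\<in>UNIV. (r $ j - c $ j) ^ K j)"

text \<open>Truncated subtraction makes \<open>falling_factorial k n\<close> vanish for \<open>n > k\<close>.\<close>

definition falling_factorial :: "nat \<Rightarrow> nat \<Rightarrow> real" where
  "falling_factorial k n = (\<Prod>i<n. real (k - i))"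

lemma falling_factorial_Suc: "falling_factorial k (Suc n) = falling_factorial k n * real (k - n)"
  by (simp add: falling_factorial_def)

lemma falling_factorial_mult_zero_power:
  "falling_factorial k n * 0 ^ (k - n) = (if n = k then fact k else 0)"
proof -
  have "falling_factorial k k = fact k"
  proof (induction k)
    case (Suc k)
    have "falling_factorial (Suc k) (Suc k) = real (Suc k) * falling_factorial k k"
      unfolding falling_factorial_def by (subst prod.lessThan_Suc_shift) simp
    then show ?case using Suc by simp
  qed (simp add: falling_factorial_def)
  moreover have "falling_factorial k n = 0" if "k < n"
    unfolding falling_factorial_def using that by (intro prod_zero) auto
  ultimately show ?thesis by (cases "n < k") auto
qed

lemma dirderiv_axis_centered_monomial:
  "dirderiv (axis j0 1) (\<lambda>r. A * centered_monomial K c r) r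
     = A * real (K j0) * centered_monomial (K(j0 := K j0 - 1)) c r"
proof -
  define R where "R = (\<Prod>j\<in>UNIV - {j0}. (r $ j - c $ j) ^ K j)"
  have split: "centered_monomial K' c r' = (r' $ j0 - c $ j0) ^ K' j0 * (\<Prod>j\<in>UNIV - {j0}. (r' $ j - c $ j) ^ K' j)"
    for K' r' unfolding centered_monomial_def by (subst prod.remove[of UNIV j0]) auto
  have "(\<Prod>j\<in>UNIV - {j0}. ((r + t *\<^sub>R axis j0 1) $ j - c $ j) ^ K j) = R" for t
    unfolding R_def by (rule prod.cong) (auto simp: axis_def)
  then have line: "A * centered_monomial K c (r + t *\<^sub>R axis j0 1) = A * (r $ j0 + t - c $ j0) ^ K j0 * R" for t
    by (simp add: split axis_def)
  have "((\<lambda>t. A * (r $ j0 + t - c $ j0) ^ K j0 * R) has_real_derivative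
        A * (real (K j0) * (r $ j0 - c $ j0) ^ (K j0 - 1)) * R) (at 0)"
    by (auto intro!: derivative_eq_intros)
  then have "dirderiv (axis j0 1) (\<lambda>r. A * centered_monomial K c r) r
      = A * real (K j0) * (r $ j0 - c $ j0) ^ (K j0 - 1) * R"
    unfolding dirderiv_def line by (auto dest!: DERIV_imp_deriv)
  also have "\<dots> = A * real (K j0) * centered_monomial (K(j0 := K j0 - 1)) c r"
    unfolding split R_def by (auto intro!: prod.cong)
  finally show ?thesis .
qed

lemma iterdir_centered_monomial:
  assumes "set ds \<subseteq> range (\<lambda>j. axis j 1)"
  shows "iterdir ds (centered_monomial K c)
       = (\<lambda>r. (\<Prod>j\<in>UNIV. falling_factorial (K j) (axis_count j ds))
               * centered_monomial (\<lambda>j. K j - axis_count j ds) c r)"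
  using assms
proof (induction ds)
  case Nil then show ?case by (simp add: axis_count_def falling_factorial_def)
next
  case (Cons v ds)
  then obtain j0 where v: "v = axis j0 1" by auto
  have count: "axis_count j (v # ds) = axis_count j ds + (if j = j0 then 1 else 0)" for j
    by (auto simp: axis_count_def v axis_eq_axis)
  have "(\<Prod>j\<in>UNIV. falling_factorial (K j) (axis_count j ds)) * real (K j0 - axis_count j0 ds)
      = (\<Prod>j\<in>UNIV. falling_factorial (K j) (axis_count j (v # ds)))"
    by (simp add: count falling_factorial_Suc prod.If_cases Int_UNIV_left prod.remove[of UNIV j0])
  moreover have "(\<lambda>j. K j - axis_count j ds)(j0 := K j0 - axis_count j0 ds - 1)
      = (\<lambda>j. K j - axis_count j (v # ds))"
    by (auto simp: count)
  ultimately show ?case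
    using Cons by (simp add: v dirderiv_axis_centered_monomial del: fun_upd_apply)
qed

lemma iterdir_centered_monomial_at_center:
  assumes "set ds \<subseteq> range (\<lambda>j. axis j 1)"
  shows "iterdir ds (centered_monomial K c) c
       = (if \<forall>j. axis_count j ds = K j then (\<Prod>j\<in>UNIV. fact (K j)) else 0)"
proof -
  have "iterdir ds (centered_monomial K c) c
      = (\<Prod>j\<in>UNIV. falling_factorial (K j) (axis_count j ds) * 0 ^ (K j - axis_count j ds))"
    by (simp add: iterdir_centered_monomial[OF assms] centered_monomial_def prod.distrib)
  also have "\<dots> = (\<Prod>j\<in>UNIV. if axis_count j ds = K j then fact (K j) else 0)"
    by (simp add: falling_factorial_mult_zero_power)
  finally show ?thesis by (auto intro: prod_zero)
qed

lemma iterdir_axis_dirs_centered_monomial: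
  "iterdir (axis_dirs J) (centered_monomial K c) c = (if J = K then (\<Prod>j\<in>UNIV. fact (K j)) else 0)"
  using iterdir_centered_monomial_at_center[OF set_axis_dirs, of J K c]
  by (auto simp: axis_count_axis_dirs)

lemma sum_mult_iterdir_axis_dirs_centered_monomial:
  assumes "finite S"
  shows "(\<Sum>(I, J)\<in>S. f I J * iterdir (axis_dirs J) (centered_monomial K c) c)
       = (\<Prod>j\<in>UNIV. fact (K j)) * (\<Sum>I\<in>{I. (I, K) \<in> S}. f I K)"
proof -
  let ?f = "\<lambda>IJ. (\<Prod>j\<in>UNIV. fact (K j)) * f (fst IJ) K"
  have "(\<Sum>(I, J)\<in>S. f I J * iterdir (axis_dirs J) (centered_monomial K c) c)
      = (\<Sum>IJ\<in>S. if snd IJ = K then ?f IJ else 0)"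
    by (rule sum.cong) (auto simp: iterdir_axis_dirs_centered_monomial)
  also have "\<dots> = sum ?f {IJ \<in> S. snd IJ = K}"
    by (rule sum.inter_filter[OF assms, symmetric])
  also have "{IJ \<in> S. snd IJ = K} = (\<lambda>I. (I, K)) ` {I. (I, K) \<in> S}" by force
  also have "sum ?f \<dots> = (\<Sum>I\<in>{I. (I, K) \<in> S}. ?f (I, K))"
    by (rule sum.reindex[unfolded o_def]) (simp add: inj_on_def)
  finally show ?thesis by (simp add: sum_distrib_left)
qed

lemma smooth_on_coordinate: "smooth_on UNIV (\<lambda>r::(real, 'i::finite) vec. r $ j - c)"
proof (rule smooth_onI)
  fix ds :: "(real, 'i) vec list" and x
  show "iterdir ds (\<lambda>r. r $ j - c) differentiable (at x)"
  proof (cases ds rule: rev_cases)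
    case Nil
    then show ?thesis by (simp add: cart_eq_inner_axis)
  next
    case (snoc ds' v)
    have "dirderiv v (\<lambda>r. r $ j - c) = (\<lambda>_. v $ j)"
      by (rule ext, simp add: dirderiv_def, rule DERIV_imp_deriv) (auto intro!: derivative_eq_intros)
    then show ?thesis using snoc iterdir_const[of ds' "v $ j"]
      by (auto simp: iterdir_append)
  qed
qed simp

lemma smooth_on_centered_monomial:
  fixes K :: "'i::finite \<Rightarrow> nat"
  shows "smooth_on UNIV (centered_monomial K c)"
proof -
  have "smooth_on UNIV (\<lambda>r::(real, 'i) vec. \<Prod>_<K j. r $ j - c $ j)" for j
    by (intro smooth_on_prod smooth_on_coordinate) simp_all
  then show ?thesis
    unfolding centered_monomial_def by (intro smooth_on_prod) simp_all
qed

lemma splits_axis_dirs_exhaust_exponents: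
  assumes p: "p \<in> set (splits (axis_dirs J))" and "\<not> K < J"
    and K: "\<And>j. axis_count j (snd p) = K j"
  shows "fst p = [] \<and> J = K"
proof -
  have count: "axis_count j (fst p) + K j = J j" for j
    using arg_cong[OF splits_mset[OF p], of "\<lambda>M. count M (axis j 1)"] K[of j]
    by (simp add: axis_count_def axis_count_axis_dirs[of j J, unfolded axis_count_def, symmetric])
  then have "K \<le> J" by (auto simp: le_fun_def) (metis le_add2)
  with \<open>\<not> K < J\<close> have "J = K" by (simp add: order.strict_iff_order)
  then have "axis j 1 \<notin> set (fst p)" for j
    using count[of j] by (simp add: axis_count_def)
  then have "fst p = []"
    using splits_set(1)[OF p] set_axis_dirs by (cases "fst p") auto
  with \<open>J = K\<close> show ?thesis by simp
qed

text \<open>At its centre, the Leibniz expansion of \<open>\<partial>\<^sup>J (k \<cdot> (r - c)\<^sup>K)\<close> keeps only the terms that put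
  exactly the exponents \<open>K\<close> on the monomial; unless \<open>J > K\<close> these put no derivative on \<open>k\<close>.\<close>

lemma iterdir_axis_dirs_mult_centered_monomial:
  fixes k :: "(real, 'q::{finite,linorder}) vec \<Rightarrow> real"
  assumes "open B" "c \<in> B" "smooth_on B k" "\<not> K < J"
  shows "iterdir (axis_dirs J) (\<lambda>r. k r * centered_monomial K c r) c
       = k c * iterdir (axis_dirs J) (centered_monomial K c) c"
proof -
  let ?t = "\<lambda>p. iterdir (fst p) k c * iterdir (snd p) (centered_monomial K c) c"
  have "?t p = 0" if p: "p \<in> set (splits (axis_dirs J))" and "\<not> (fst p = [] \<and> J = K)" for p
  proof -
    have "set (snd p) \<subseteq> range (\<lambda>j. axis j 1)"
      using splits_set(2)[OF p] set_axis_dirs by blast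
    then show ?thesis
      using splits_axis_dirs_exhaust_exponents[OF p assms(4)] that(2)
      by (auto simp: iterdir_centered_monomial_at_center)
  qed
  then have "sum_list (map ?t (splits (axis_dirs J)))
      = sum_list (map ?t (filter (\<lambda>p. fst p = [] \<and> J = K) (splits (axis_dirs J))))"
    by (intro sum_list_map_filter[symmetric]) blast
  then show ?thesis
    using iterdir_mult[OF assms(1,3) smooth_on_subset[OF smooth_on_centered_monomial] assms(2)]
    by (cases "J = K") (auto simp: split_def filter_splits_fst_Nil iterdir_axis_dirs_centered_monomial)
qed

section \<open>Polynomials vanishing on integer points\<close>

lemma sum_powers_vanishing_on_ints:
  fixes c :: "'a \<Rightarrow> real" and e :: "'a \<Rightarrow> nat"
  assumes "finite F" "\<And>t::int. (\<Sum>x\<in>F. c x * of_int t ^ e x) = 0"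
  shows "(\<Sum>x\<in>{x\<in>F. e x = n}. c x) = 0"
proof -
  define p where "p = (\<Sum>x\<in>F. monom (c x) (e x))"
  have "p = 0"
  proof (rule ccontr)
    assume "p \<noteq> 0"
    then have "finite {t. poly p t = 0}" by (rule poly_roots_finite)
    moreover have "range real_of_int \<subseteq> {t. poly p t = 0}"
      using assms(2) by (auto simp: p_def poly_sum poly_monom)
    moreover have "infinite (range real_of_int)"
      using finite_imageD[of real_of_int UNIV] infinite_UNIV_int by (auto simp: inj_on_def)
    ultimately show False using finite_subset by blast
  qed
  then have "coeff p n = 0" by simp
  then show ?thesis
    using assms(1) by (simp add: p_def coeff_sum coeff_monom sum.inter_filter)
qed

text \<open>The monomials are told apart by their exponents on \<open>A\<close>; the induction fixes one
  variable at a time and compares coefficients of the resulting one-variable polynomials.\<close>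

lemma coeffs_zero_if_vanishing_on_int_lattice:
  fixes d :: "('p \<Rightarrow> nat) \<Rightarrow> real"
  assumes "finite A" "finite F" "inj_on (\<lambda>N. restrict N A) F"
    and "\<And>m::'p \<Rightarrow> int. (\<Sum>N\<in>F. d N * (\<Prod>i\<in>A. of_int (m i) ^ N i)) = 0"
    and "N \<in> F"
  shows "d N = 0"
  using assms
proof (induction A arbitrary: F N rule: finite_induct)
  case empty
  then have "F = {N}" by (auto simp: inj_on_def)
  then show ?case using empty.prems(3) by simp
next
  case (insert a A)
  let ?Fn = "{N'\<in>F. N' a = N a}"
  show ?case
  proof (rule insert.IH)
    show "finite ?Fn" using insert.prems(1) by simp
    show "inj_on (\<lambda>N'. restrict N' A) ?Fn"
    proof (rule inj_onI)
      fix N1 N2 assume N12: "N1 \<in> ?Fn" "N2 \<in> ?Fn" and "restrict N1 A = restrict N2 A"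
      then have "restrict N1 (insert a A) = restrict N2 (insert a A)"
        by (auto simp: restrict_def fun_eq_iff) metis
      then show "N1 = N2" using inj_onD[OF insert.prems(2)] N12 by blast
    qed
    show "N \<in> ?Fn" using insert.prems(4) by simp
    fix m :: "'p \<Rightarrow> int"
    have "(\<Prod>i\<in>insert a A. of_int ((m(a := t)) i) ^ N' i)
        = of_int t ^ N' a * (\<Prod>i\<in>A. of_int (m i) ^ N' i :: real)" for t N'
    proof -
      have "(\<Prod>i\<in>A. of_int ((m(a := t)) i) ^ N' i) = (\<Prod>i\<in>A. of_int (m i) ^ N' i :: real)"
        using insert.hyps(2) by (intro prod.cong) auto
      then show ?thesis using insert.hyps by simp
    qed
    then have "(\<Sum>N'\<in>F. (d N' * (\<Prod>i\<in>A. of_int (m i) ^ N' i)) * of_int t ^ N' a) = 0" for t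
      using insert.prems(3)[of "m(a := t)"] by (simp only: ac_simps)
    then show "(\<Sum>N'\<in>?Fn. d N' * (\<Prod>i\<in>A. of_int (m i) ^ N' i)) = 0"
      by (rule sum_powers_vanishing_on_ints[OF insert.prems(1)])
  qed
qed

lemma wave_coeffs_zero:
  fixes d :: "('p::finite \<Rightarrow> nat) \<Rightarrow> real"
  assumes "finite F"
    and vanish: "\<And>m::'p \<Rightarrow> int. \<And>\<beta>. (\<Sum>N\<in>F. d N * multi_power (\<chi> i. 2 * pi * of_int (m i)) N
              * cos (\<beta> + real (multi_degree N) * (pi / 2))) = 0"
    and "N \<in> F"
  shows "d N = 0"
proof -
  define s where "s N = real (multi_degree N) * (pi / 2)" for N :: "'p \<Rightarrow> nat"
  define c where "c N = d N * (2 * pi) ^ multi_degree N" for N :: "'p \<Rightarrow> nat"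
  have power: "multi_power (\<chi> i. 2 * pi * of_int (m i)) N = (2 * pi) ^ multi_degree N * (\<Prod>i\<in>UNIV. of_int (m i) ^ N i)"
    for m :: "'p \<Rightarrow> int" and N
    by (simp add: multi_power_def multi_degree_def power_mult_distrib prod.distrib power_sum)
  have vanish': "(\<Sum>N\<in>F. c N * cos (\<beta> + s N) * (\<Prod>i\<in>UNIV. of_int (m i) ^ N i)) = 0" for m \<beta>
    using vanish[of m \<beta>] unfolding power c_def s_def by (simp only: ac_simps)
  have inj: "inj_on (\<lambda>N. restrict N UNIV) F" by (simp add: inj_on_def restrict_def)
  have "c N * cos (s N) = 0"
    by (rule coeffs_zero_if_vanishing_on_int_lattice[OF finite assms(1) inj _ assms(3)])
       (use vanish'[where \<beta> = 0] in simp)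
  moreover have "c N * sin (s N) = 0"
  proof (rule coeffs_zero_if_vanishing_on_int_lattice[OF finite assms(1) inj _ assms(3)])
    fix m :: "'p \<Rightarrow> int"
    have "cos (pi / 2 + s N) = - sin (s N)" for N by (simp add: cos_add)
    then have "(\<Sum>N\<in>F. - (c N * sin (s N) * (\<Prod>i\<in>UNIV. of_int (m i) ^ N i))) = 0"
      using vanish'[where m = m and \<beta> = "pi / 2"] by simp
    then show "(\<Sum>N\<in>F. c N * sin (s N) * (\<Prod>i\<in>UNIV. of_int (m i) ^ N i)) = 0"
      by (simp add: sum_negf)
  qed
  moreover have "cos (s N) \<noteq> 0 \<or> sin (s N) \<noteq> 0"
    using sin_cos_squared_add[of "s N"] by (auto simp: power2_eq_square)
  ultimately show ?thesis by (auto simp: c_def)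
qed

section \<open>Periodic functions and the flow of \<open>Z\<close>\<close>

lemma vec_lambda_eq_sum_axis: "(\<chi> i. f i) = (\<Sum>i\<in>UNIV. f i *\<^sub>R axis i (1::real))"
  by (simp add: vec_eq_iff sum_component axis_def if_distrib cong: if_cong)

definition unit_periodic :: "((real, 'p::finite) vec \<Rightarrow> 'b) \<Rightarrow> bool" where
  "unit_periodic f \<longleftrightarrow> (\<forall>i \<theta>. f (\<theta> + axis i 1) = f \<theta>)"

lemma theta_periodic_iff: "theta_periodic g \<longleftrightarrow> (\<forall>r. unit_periodic (\<lambda>\<theta>. g (\<theta>, r)))"
  by (auto simp: theta_periodic_def unit_periodic_def)

lemma unit_periodic_shift_axis:
  assumes "unit_periodic f"
  shows "f (\<theta> + of_int k *\<^sub>R axis i 1) = f \<theta>"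
proof -
  have shift_nat: "f (\<theta> + real n *\<^sub>R axis i 1) = f \<theta>" for n \<theta>
  proof (induction n)
    case (Suc n)
    have "f (\<theta> + real (Suc n) *\<^sub>R axis i 1) = f ((\<theta> + real n *\<^sub>R axis i 1) + axis i 1)"
      by (simp add: algebra_simps)
    then show ?case using assms Suc by (simp add: unit_periodic_def)
  qed simp
  show ?thesis
  proof (cases "k \<ge> 0")
    case True
    then show ?thesis using shift_nat[where n = "nat k"] by simp
  next
    case False
    then show ?thesis
      using shift_nat[where n = "nat (- k)" and \<theta> = "\<theta> + of_int k *\<^sub>R axis i 1"] by (simp add: algebra_simps)
  qed
qed

lemma unit_periodic_shift_int:
  assumes "unit_periodic f"
  shows "f (\<theta> + (\<chi> i. of_int (k i))) = f \<theta>"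
proof -
  have "f (\<theta> + (\<Sum>i\<in>A. of_int (k i) *\<^sub>R axis i 1)) = f \<theta>" if "finite A" for A
    using that
  proof (induction A arbitrary: \<theta> rule: finite_induct)
    case (insert j A)
    then show ?case
      using unit_periodic_shift_axis[OF assms, of "\<theta> + (\<Sum>i\<in>A. of_int (k i) *\<^sub>R axis i 1)" "k j" j]
      by (simp add: algebra_simps)
  qed simp
  then show ?thesis by (simp add: vec_lambda_eq_sum_axis[of "\<lambda>i. of_int (k i)"])
qed

lemma unit_periodic_bounded:
  fixes f :: "(real, 'p::finite) vec \<Rightarrow> real"
  assumes "unit_periodic f" "continuous_on UNIV f"
  obtains M where "\<And>\<theta>. \<bar>f \<theta>\<bar> \<le> M"
proof -
  have "compact (f ` cbox 0 (\<chi> i. 1))"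
    by (rule compact_continuous_image[OF continuous_on_subset[OF assms(2)]]) auto
  then obtain M where M: "\<And>y. y \<in> f ` cbox 0 (\<chi> i. 1) \<Longrightarrow> \<bar>y\<bar> \<le> M"
    using compact_imp_bounded bounded_iff by (metis real_norm_def)
  have "\<bar>f \<theta>\<bar> \<le> M" for \<theta>
  proof -
    define \<theta>' where "\<theta>' = \<theta> + (\<chi> i. of_int (- \<lfloor>\<theta> $ i\<rfloor>))"
    have "\<theta>' \<in> cbox 0 (\<chi> i. 1)"
      unfolding \<theta>'_def mem_box_cart by (auto simp: less_imp_le floor_le_iff) linarith
    moreover have "f \<theta>' = f \<theta>" unfolding \<theta>'_def by (rule unit_periodic_shift_int[OF assms(1)])
    ultimately show ?thesis using M by force
  qed
  then show ?thesis using that by blast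
qed

text \<open>A derivative that is constant along the lines in direction \<open>v\<close> makes \<open>f\<close> affine on
  them; boundedness of a continuous periodic function forces the slope to vanish.\<close>

lemma unit_periodic_dirderiv_const:
  fixes f :: "(real, 'p::finite) vec \<Rightarrow> real"
  assumes diff: "\<And>\<theta>. f differentiable (at \<theta>)" and per: "unit_periodic f"
    and const: "\<And>\<theta>. dirderiv v f \<theta> = E"
  shows "E = 0" and "f (\<theta> + t *\<^sub>R v) = f \<theta>"
proof -
  have affine: "f (\<theta> + t *\<^sub>R v) = f \<theta> + t * E" for \<theta> t
  proof -
    have line: "((\<lambda>t. f (\<theta> + t *\<^sub>R v)) has_real_derivative E) (at s)" for s
      using line_has_real_derivative_dirderiv[OF diff, where x = \<theta> and s = s and v = v] by (simp add: const)
    have "((\<lambda>t. f (\<theta> + t *\<^sub>R v) - t * E) has_real_derivative E - 1 * E) (at s)" for s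
      by (rule DERIV_diff[OF line DERIV_cmult_right[OF DERIV_ident]])
    then have "((\<lambda>t. f (\<theta> + t *\<^sub>R v) - t * E) has_real_derivative 0) (at s)" for s
      by simp
    from DERIV_isconst_all[OF allI[OF this], of t 0] show ?thesis by simp
  qed
  have "continuous_on UNIV f"
    using diff differentiable_imp_continuous_within continuous_at_imp_continuous_on by blast
  then obtain M where M: "\<And>\<theta>. \<bar>f \<theta>\<bar> \<le> M" using unit_periodic_bounded[OF per] by blast
  show "E = 0"
  proof (rule ccontr)
    assume "E \<noteq> 0"
    then have "f (((2 * M + 1) / E) *\<^sub>R v) = f 0 + (2 * M + 1)" using affine[of 0] by simp
    then show False using M[of "((2 * M + 1) / E) *\<^sub>R v"] M[of 0] by linarith
  qed
  then show "f (\<theta> + t *\<^sub>R v) = f \<theta>" using affine by simp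
qed

lemma Zop_eq_dirderiv:
  fixes F :: "(real, 'p::finite) vec \<times> (real, 'q::finite) vec \<Rightarrow> real"
  assumes "F differentiable (at (\<theta>, r))"
  shows "Zop a F (\<theta>, r) = dirderiv (\<chi> i. a i r) (\<lambda>\<theta>. F (\<theta>, r)) \<theta>"
proof -
  obtain F' where F': "(F has_derivative F') (at (\<theta>, r))"
    using assms by (auto simp: differentiable_def)
  have "((\<lambda>\<theta>. (\<theta>, r)) has_derivative (\<lambda>h. (h, 0))) (at \<theta>)"
    by (auto intro!: derivative_eq_intros)
  from has_derivative_compose[OF this F']
  have "((\<lambda>\<theta>. F (\<theta>, r)) has_derivative (\<lambda>h. F' (h, 0))) (at \<theta>)" by (simp add: o_def)
  moreover have "((\<chi> i. a i r), 0) = (\<Sum>i\<in>UNIV. a i r *\<^sub>R (axis i 1, 0 :: (real, 'q) vec))"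
    by (simp add: prod_eq_iff fst_sum snd_sum vec_lambda_eq_sum_axis[of "\<lambda>i. a i r"])
  ultimately have "dirderiv (\<chi> i. a i r) (\<lambda>\<theta>. F (\<theta>, r)) \<theta> = F' (\<Sum>i\<in>UNIV. a i r *\<^sub>R (axis i 1, 0))"
    by (simp add: dirderiv_eq_derivative)
  also have "\<dots> = (\<Sum>i\<in>UNIV. a i r * dirderiv (axis i 1, 0) F (\<theta>, r))"
    using has_derivative_linear[OF F']
    by (simp add: linear_sum linear_scale dirderiv_eq_derivative[OF F'] del: scaleR_Pair)
  finally show ?thesis by (simp add: Zop_def)
qed

section \<open>Lines with nonresonant direction are dense on the torus\<close>

definition nonresonant :: "(real, 'p::finite) vec \<Rightarrow> bool" where
  "nonresonant v \<longleftrightarrow> (\<forall>k::'p \<Rightarrow> int. (\<exists>i. k i \<noteq> 0) \<longrightarrow> (\<Sum>i\<in>UNIV. of_int (k i) * v $ i) \<noteq> 0)"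

lemma nonresonant_inj:
  assumes "nonresonant v"
  shows "inj (($) v)"
proof (rule injI, rule ccontr)
  fix i1 i2 assume eq: "v $ i1 = v $ i2" and ne: "i1 \<noteq> i2"
  define k :: "_ \<Rightarrow> int" where "k i = (if i = i1 then 1 else 0) - (if i = i2 then 1 else 0)" for i
  have "(\<Sum>i\<in>UNIV. of_int (k i) * v $ i)
      = (\<Sum>i\<in>UNIV. (if i = i1 then v $ i else 0) - (if i = i2 then v $ i else 0))"
    by (rule sum.cong) (auto simp: k_def)
  also have "\<dots> = v $ i1 - v $ i2" by (simp only: sum_subtractf sum.delta finite UNIV_I if_True)
  finally have "(\<Sum>i\<in>UNIV. of_int (k i) * v $ i) = v $ i1 - v $ i2" .
  moreover have "k i1 \<noteq> 0" using ne by (simp add: k_def)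
  ultimately show False using assms eq unfolding nonresonant_def by auto
qed

lemma nonresonant_independent:
  assumes "nonresonant v"
  shows "module.independent (\<lambda>r. (*) (real_of_int r)) (range (($) v))"
proof -
  interpret module "(\<lambda>r. (*) (real_of_int r))"
    by (simp add: Modules.module.intro distrib_left mult.commute)
  show "independent (range (($) v))"
  proof
    assume "dependent (range (($) v))"
    then obtain T u where T: "finite T" "T \<subseteq> range (($) v)" "(\<Sum>x\<in>T. real_of_int (u x) * x) = 0"
      and nz: "\<exists>x\<in>T. u x \<noteq> 0"
      unfolding dependent_explicit by blast
    define k where "k i = (if v $ i \<in> T then u (v $ i) else 0)" for i
    have inj: "inj (($) v)" by (rule nonresonant_inj[OF assms])
    have "(\<Sum>i\<in>UNIV. of_int (k i) * v $ i) = (\<Sum>i\<in>{i. v $ i \<in> T}. of_int (u (v $ i)) * v $ i)"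
      unfolding k_def by (rule sum.mono_neutral_cong_right) auto
    also have "\<dots> = (\<Sum>x\<in>(($) v) ` {i. v $ i \<in> T}. real_of_int (u x) * x)"
      by (rule sum.reindex[symmetric, unfolded o_def]) (use inj in \<open>auto simp: inj_on_def\<close>)
    also have "(($) v) ` {i. v $ i \<in> T} = T" using T(2) by auto
    finally have "(\<Sum>i\<in>UNIV. of_int (k i) * v $ i) = 0" using T(3) by simp
    moreover obtain i where "v $ i \<in> T" "u (v $ i) \<noteq> 0" using nz T(2) by auto
    then have "k i \<noteq> 0" by (simp add: k_def)
    ultimately show False using assms unfolding nonresonant_def by blast
  qed
qed

lemma nonresonant_Kronecker:
  fixes v \<theta> :: "(real, 'p::finite) vec"
  assumes "nonresonant v" "\<epsilon> > 0"
  obtains t k where "\<And>i. \<bar>t * v $ i - of_int (k i) - \<theta> $ i\<bar> < \<epsilon>"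
proof -
  let ?n = "CARD('p)"
  obtain e where e: "bij_betw e {..<?n} (UNIV::'p set)"
    using ex_bij_betw_nat_finite[of "UNIV::'p set"] by (auto simp: lessThan_atLeast0)
  have "(\<lambda>j. v $ e j) ` {..<?n} = range (($) v)"
    using e by (auto simp: bij_betw_def image_image[symmetric])
  moreover have "inj_on (\<lambda>j. v $ e j) {..<?n}"
    using e nonresonant_inj[OF assms(1)] unfolding bij_betw_def inj_on_def by blast
  ultimately obtain t h where th: "\<And>j. j < ?n \<Longrightarrow> \<bar>t * v $ e j - of_int (h j) - \<theta> $ e j\<bar> < \<epsilon>"
    using Kronecker_thm_1[of "\<lambda>j. v $ e j" ?n \<epsilon> "\<lambda>j. \<theta> $ e j"] nonresonant_independent[OF assms(1)] assms(2)
    by auto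
  have "\<bar>t * v $ i - of_int (h (inv_into {..<?n} e i)) - \<theta> $ i\<bar> < \<epsilon>" for i
    using th[of "inv_into {..<?n} e i"] e bij_betw_inv_into_right[OF e] bij_betw_inv_into[OF e]
    by (auto simp: bij_betw_def)
  then show ?thesis by (rule that)
qed

lemma unit_periodic_line_invariant_const:
  fixes f :: "(real, 'p::finite) vec \<Rightarrow> real"
  assumes "nonresonant v" "unit_periodic f" "continuous_on UNIV f"
    and inv: "\<And>\<theta> t. f (\<theta> + t *\<^sub>R v) = f \<theta>"
  shows "f \<theta> = f \<theta>'"
proof (rule ccontr)
  assume "f \<theta> \<noteq> f \<theta>'"
  then have "\<bar>f \<theta> - f \<theta>'\<bar> > 0" by simp
  then obtain \<delta> where \<delta>: "\<delta> > 0" "\<And>x. dist x \<theta>' < \<delta> \<Longrightarrow> dist (f x) (f \<theta>') < \<bar>f \<theta> - f \<theta>'\<bar>"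
    using assms(3) unfolding continuous_on_iff by blast
  define \<epsilon> where "\<epsilon> = \<delta> / (real CARD('p) + 1)"
  have "\<epsilon> > 0" using \<delta> by (simp add: \<epsilon>_def)
  then obtain t k where tk: "\<And>i. \<bar>t * v $ i - of_int (k i) - (\<theta>' - \<theta>) $ i\<bar> < \<epsilon>"
    using nonresonant_Kronecker[OF assms(1)] by metis
  define x where "x = (\<theta> + t *\<^sub>R v) + (\<chi> i. of_int (- k i))"
  have "dist x \<theta>' \<le> (\<Sum>i\<in>UNIV. \<bar>(x - \<theta>') $ i\<bar>)"
    unfolding dist_norm by (rule norm_le_l1_cart)
  also have "\<dots> \<le> (\<Sum>i\<in>(UNIV::'p set). \<epsilon>)"
    using tk by (intro sum_mono less_imp_le) (simp add: x_def algebra_simps)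
  also have "\<dots> < \<delta>"
    using \<delta>(1) by (simp add: \<epsilon>_def field_simps)
  finally have "dist (f x) (f \<theta>') < \<bar>f \<theta> - f \<theta>'\<bar>" by (rule \<delta>(2))
  moreover have "f x = f \<theta>"
    unfolding x_def using unit_periodic_shift_int[OF assms(2)] inv by (simp del: of_int_minus)
  ultimately show False by (simp add: dist_real_def)
qed

lemma cball_subset_closure:
  fixes x :: "'a::real_normed_vector"
  assumes "\<epsilon> > 0" and meets: "\<And>V. open V \<Longrightarrow> V \<noteq> {} \<Longrightarrow> V \<subseteq> ball x \<epsilon> \<Longrightarrow> V \<inter> X \<noteq> {}"
  shows "cball x \<epsilon> \<subseteq> closure X"
proof (clarsimp simp: closure_approachable)
  fix y and e :: real assume "dist x y \<le> \<epsilon>" "e > 0"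
  then have "y \<in> ball y e \<inter> closure (ball x \<epsilon>)" using assms(1) by simp
  then have "ball y e \<inter> ball x \<epsilon> \<noteq> {}"
    using open_Int_closure_eq_empty[of "ball y e" "ball x \<epsilon>"] by blast
  then obtain z where "z \<in> ball y e" "z \<in> X" using meets[of "ball y e \<inter> ball x \<epsilon>"] by blast
  then show "\<exists>z\<in>X. dist z y < e" by (auto simp: dist_commute)
qed

text \<open>Baire: the parameters at which some integer relation holds form a countable union of
  closed sets, each with empty interior by incommensurability.\<close>

lemma nonresonant_dense:
  fixes a :: "'p::finite \<Rightarrow> (real, 'q::finite) vec \<Rightarrow> real"
  assumes "open B" "incommensurable a B" "\<And>i. continuous_on B (a i)" "r0 \<in> B"
  shows "r0 \<in> closure {r \<in> B. nonresonant (\<chi> i. a i r)}"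
proof -
  obtain \<epsilon> where \<epsilon>: "\<epsilon> > 0" "cball r0 \<epsilon> \<subseteq> B"
    using assms(1,4) open_contains_cball by blast
  define S where "S = cball r0 \<epsilon>"
  define f where "f k r = (\<Sum>i\<in>UNIV. of_int (k i) * a i r)" for k :: "'p \<Rightarrow> int" and r
  define T where "T k = {r \<in> S. (\<exists>i. k i \<noteq> 0) \<longrightarrow> f k r \<noteq> 0}" for k
  have "openin (top_of_set S) (T k)" for k
  proof -
    have "continuous_on S (f k)"
      unfolding f_def using \<epsilon>(2) by (intro continuous_intros continuous_on_subset[OF assms(3)]) (simp add: S_def)
    from continuous_openin_preimage_gen[OF this, of "- {0}"]
    show ?thesis by (cases "\<exists>i. k i \<noteq> 0") (auto simp: T_def vimage_def Int_def)
  qed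
  moreover have "S \<subseteq> closure (T k)" for k
  proof (cases "\<exists>i. k i \<noteq> 0")
    case True
    show ?thesis unfolding S_def
    proof (rule cball_subset_closure[OF \<epsilon>(1)])
      fix V assume V: "open V" "V \<noteq> {}" "V \<subseteq> ball r0 \<epsilon>"
      then obtain x where x: "x \<in> V" "f k x \<noteq> 0"
        using assms(2) True \<epsilon>(2) unfolding incommensurable_def f_def by (meson ball_subset_cball order_trans)
      then have "x \<in> T k" using V(3) by (auto simp: T_def S_def)
      with x(1) show "V \<inter> T k \<noteq> {}" by blast
    qed
  qed (auto simp: T_def closure_subset)
  ultimately have "S \<subseteq> closure (\<Inter>(range T))"
    by (intro Baire) (auto simp: S_def)
  moreover have "\<Inter>(range T) \<subseteq> {r \<in> B. nonresonant (\<chi> i. a i r)}"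
  proof
    fix r assume r: "r \<in> \<Inter>(range T)"
    then have "r \<in> S" by (auto simp: T_def)
    moreover have "nonresonant (\<chi> i. a i r)"
      using r unfolding nonresonant_def T_def f_def by auto
    ultimately show "r \<in> {r \<in> B. nonresonant (\<chi> i. a i r)}" using \<epsilon>(2) by (auto simp: S_def)
  qed
  moreover have "r0 \<in> S" using \<epsilon>(1) by (simp add: S_def)
  ultimately show ?thesis using closure_mono by blast
qed

lemma theta_invariant_if_Zop_zero:
  fixes F :: "(real, 'p::finite) vec \<times> (real, 'q::finite) vec \<Rightarrow> real"
  assumes "open B" "incommensurable a B" "\<And>i. continuous_on B (a i)"
    and diff: "\<And>\<theta> r. r \<in> B \<Longrightarrow> F differentiable (at (\<theta>, r))"
    and per: "theta_periodic F"
    and Z: "\<And>\<theta> r. r \<in> B \<Longrightarrow> Zop a F (\<theta>, r) = 0"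
    and "r0 \<in> B"
  shows "F (\<theta>, r0) = F (\<theta>', r0)"
proof -
  have cont: "isCont F (\<theta>, r)" if "r \<in> B" for \<theta> r
    using diff[OF that] differentiable_imp_continuous_within by blast
  have fiber_diff: "(\<lambda>\<theta>. F (\<theta>, r)) differentiable (at \<theta>)" if "r \<in> B" for \<theta> r
    by (rule differentiable_at_Pair_left[OF diff[OF that]])
  have "F (\<theta>, r) = F (\<theta>', r)" if r: "r \<in> B" "nonresonant (\<chi> i. a i r)" for r
  proof (rule unit_periodic_line_invariant_const[OF r(2)])
    show "unit_periodic (\<lambda>\<theta>. F (\<theta>, r))" using per by (simp add: theta_periodic_iff)
    show "continuous_on UNIV (\<lambda>\<theta>. F (\<theta>, r))"
      using fiber_diff[OF r(1)] differentiable_imp_continuous_within continuous_at_imp_continuous_on by blast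
    show "F (\<theta> + t *\<^sub>R (\<chi> i. a i r), r) = F (\<theta>, r)" for \<theta> t
      using Z[OF r(1)] Zop_eq_dirderiv[OF diff[OF r(1)]] fiber_diff[OF r(1)] per
      by (intro unit_periodic_dirderiv_const(2)[where E = 0]) (auto simp: theta_periodic_iff)
  qed
  moreover obtain s where "\<And>n. s n \<in> B" "\<And>n. nonresonant (\<chi> i. a i (s n))" "s \<longlonglongrightarrow> r0"
    using nonresonant_dense[OF assms(1-3) assms(7)] unfolding closure_sequential by blast
  ultimately have "(\<lambda>n. F (\<theta>, s n)) = (\<lambda>n. F (\<theta>', s n))" "s \<longlonglongrightarrow> r0" by auto
  moreover have "(\<lambda>n. F (x, s n)) \<longlonglongrightarrow> F (x, r0)" for x
    by (rule isCont_tendsto_compose[OF cont[OF assms(7)]]) (intro tendsto_intros \<open>s \<longlonglongrightarrow> r0\<close>)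
  ultimately show ?thesis using LIMSEQ_unique by metis
qed

lemma dirderiv_theta_Lop_tensor:
  fixes \<phi> :: "(real, 'p::{finite,linorder}) vec \<Rightarrow> real" and h :: "(real, 'q::{finite,linorder}) vec \<Rightarrow> real"
  assumes "open B" "r \<in> B" "finite S" "\<And>IJ. IJ \<in> S \<Longrightarrow> smooth_on (UNIV \<times> B) (C IJ)"
    and "smooth_on UNIV \<phi>" "smooth_on B h"
  shows "dirderiv (v, 0) (Lop S C (\<lambda>y. \<phi> (fst y) * h (snd y))) (\<theta>, r)
     = (\<Sum>(I, J)\<in>S. (dirderiv (v, 0) (C (I, J)) (\<theta>, r) * iterdir (axis_dirs I) \<phi> \<theta>
          + C (I, J) (\<theta>, r) * dirderiv v (iterdir (axis_dirs I) \<phi>) \<theta>) * iterdir (axis_dirs J) h r)"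
proof -
  have U: "open (UNIV \<times> B)" "(\<theta>, r) \<in> UNIV \<times> B" using assms(1,2) by (auto intro: open_Times)
  define P where "P I J = (\<lambda>y. iterdir (axis_dirs I) \<phi> (fst y) * iterdir (axis_dirs J) h (snd y))" for I J
  have P_diff: "P I J differentiable (at (\<theta>, r))" for I J
    unfolding P_def
    by (rule smooth_on_imp_differentiable[OF smooth_on_tensor[OF assms(1)] U])
       (intro smooth_on_iterdir assms(5,6))+
  have C_diff: "C IJ differentiable (at (\<theta>, r))" if "IJ \<in> S" for IJ
    by (rule smooth_on_imp_differentiable[OF assms(4)[OF that] U])
  have "dirderiv (v, 0) (Lop S C (\<lambda>y. \<phi> (fst y) * h (snd y))) (\<theta>, r)
      = dirderiv (v, 0) (\<lambda>y. \<Sum>(I, J)\<in>S. C (I, J) y * P I J y) (\<theta>, r)"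
    by (rule dirderiv_cong_open[OF U])
       (auto simp: Lop_def P_def partial_IJ_tensor[OF assms(1,5,6)] intro!: sum.cong)
  also have "\<dots> = (\<Sum>(I, J)\<in>S. dirderiv (v, 0) (\<lambda>y. C (I, J) y * P I J y) (\<theta>, r))"
    unfolding split_def by (rule dirderiv_sum[OF assms(3)]) (auto intro!: differentiable_mult C_diff P_diff)
  also have "\<dots> = (\<Sum>(I, J)\<in>S. (dirderiv (v, 0) (C (I, J)) (\<theta>, r) * iterdir (axis_dirs I) \<phi> \<theta>
          + C (I, J) (\<theta>, r) * dirderiv v (iterdir (axis_dirs I) \<phi>) \<theta>) * iterdir (axis_dirs J) h r)"
  proof (rule sum.cong[OF refl], clarify)
    fix I J assume "(I, J) \<in> S"
    then show "dirderiv (v, 0) (\<lambda>y. C (I, J) y * P I J y) (\<theta>, r)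
        = (dirderiv (v, 0) (C (I, J)) (\<theta>, r) * iterdir (axis_dirs I) \<phi> \<theta>
          + C (I, J) (\<theta>, r) * dirderiv v (iterdir (axis_dirs I) \<phi>) \<theta>) * iterdir (axis_dirs J) h r"
      using dirderiv_mult[OF C_diff P_diff] dirderiv_fst_tensor[OF smooth_on_imp_differentiable[OF
          smooth_on_iterdir[OF assms(5)] open_UNIV UNIV_I], where h = "iterdir (axis_dirs J) h"]
      by (simp add: P_def algebra_simps)
  qed
  finally show ?thesis .
qed

lemma Zop_Lop_tensor:
  fixes a :: "'p::{finite,linorder} \<Rightarrow> (real, 'q::{finite,linorder}) vec \<Rightarrow> real"
    and \<phi> :: "(real, 'p) vec \<Rightarrow> real" and h :: "(real, 'q) vec \<Rightarrow> real"
  assumes "open B" "r \<in> B" "finite S" "\<And>IJ. IJ \<in> S \<Longrightarrow> smooth_on (UNIV \<times> B) (C IJ)"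
    and "smooth_on UNIV \<phi>" "smooth_on B h"
  shows "Zop a (Lop S C (\<lambda>y. \<phi> (fst y) * h (snd y))) (\<theta>, r)
     = (\<Sum>(I, J)\<in>S. (Zop a (C (I, J)) (\<theta>, r) * iterdir (axis_dirs I) \<phi> \<theta>
          + C (I, J) (\<theta>, r) * (\<Sum>i\<in>UNIV. a i r * dirderiv (axis i 1) (iterdir (axis_dirs I) \<phi>) \<theta>))
          * iterdir (axis_dirs J) h r)"
proof -
  have "Zop a (Lop S C (\<lambda>y. \<phi> (fst y) * h (snd y))) (\<theta>, r)
      = (\<Sum>i\<in>UNIV. \<Sum>(I, J)\<in>S. a i r * ((dirderiv (axis i 1, 0) (C (I, J)) (\<theta>, r) * iterdir (axis_dirs I) \<phi> \<theta>
          + C (I, J) (\<theta>, r) * dirderiv (axis i 1) (iterdir (axis_dirs I) \<phi>) \<theta>) * iterdir (axis_dirs J) h r))"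
    by (simp add: Zop_def dirderiv_theta_Lop_tensor[OF assms] sum_distrib_left split_def)
  also have "\<dots> = (\<Sum>(I, J)\<in>S. \<Sum>i\<in>UNIV. a i r * ((dirderiv (axis i 1, 0) (C (I, J)) (\<theta>, r) * iterdir (axis_dirs I) \<phi> \<theta>
          + C (I, J) (\<theta>, r) * dirderiv (axis i 1) (iterdir (axis_dirs I) \<phi>) \<theta>) * iterdir (axis_dirs J) h r))"
    unfolding split_def by (rule sum.swap)
  finally show ?thesis
    by (simp add: Zop_def split_def sum.distrib sum_distrib_left sum_distrib_right algebra_simps)
qed

lemma Lop_Zop_tensor:
  fixes a :: "'p::{finite,linorder} \<Rightarrow> (real, 'q::{finite,linorder}) vec \<Rightarrow> real"
    and \<phi> :: "(real, 'p) vec \<Rightarrow> real" and h :: "(real, 'q) vec \<Rightarrow> real"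
  assumes "open B" "r \<in> B" "\<And>i. smooth_on B (a i)" "smooth_on UNIV \<phi>" "smooth_on B h"
  shows "Lop S C (Zop a (\<lambda>y. \<phi> (fst y) * h (snd y))) (\<theta>, r)
     = (\<Sum>(I, J)\<in>S. C (I, J) (\<theta>, r) * (\<Sum>i\<in>UNIV. iterdir (axis_dirs I @ [axis i 1]) \<phi> \<theta>
          * iterdir (axis_dirs J) (\<lambda>r. a i r * h r) r))"
proof -
  have "Zop a (\<lambda>y. \<phi> (fst y) * h (snd y))
      = (\<lambda>y. \<Sum>i\<in>UNIV. dirderiv (axis i 1) \<phi> (fst y) * (a i (snd y) * h (snd y)))"
  proof
    fix y :: "(real, 'p) vec \<times> (real, 'q) vec"
    show "Zop a (\<lambda>y. \<phi> (fst y) * h (snd y)) y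
        = (\<Sum>i\<in>UNIV. dirderiv (axis i 1) \<phi> (fst y) * (a i (snd y) * h (snd y)))"
      by (cases y) (simp only: Zop_def case_prod_conv fst_conv snd_conv dirderiv_fst_tensor[OF
          smooth_on_imp_differentiable[OF assms(4) open_UNIV UNIV_I]] ac_simps)
  qed
  moreover have "partial_IJ I J (\<lambda>y. \<Sum>i\<in>UNIV. dirderiv (axis i 1) \<phi> (fst y) * (a i (snd y) * h (snd y))) (\<theta>, r)
      = (\<Sum>i\<in>UNIV. iterdir (axis_dirs I @ [axis i 1]) \<phi> \<theta> * iterdir (axis_dirs J) (\<lambda>r. a i r * h r) r)" for I J
    using partial_IJ_tensor_sum[OF assms(1) finite _ _ assms(2),
        where \<phi> = "\<lambda>i. dirderiv (axis i 1) \<phi>" and h = "\<lambda>i r. a i r * h r"]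
      smooth_on_iterdir[OF assms(4), of "[axis _ 1]"] smooth_on_mult[OF assms(1,3,5)]
    by (simp add: iterdir_append)
  ultimately show ?thesis by (simp add: Lop_def split_def)
qed

section \<open>Testing the commutation against plane waves times monomials\<close>

lemma theta_periodic_plane_wave_tensor:
  assumes "w = (\<chi> i. 2 * pi * of_int (m i))"
  shows "theta_periodic (\<lambda>y. plane_wave w \<alpha> (fst y) * h (snd y))"
proof -
  have "plane_wave w \<alpha> (\<theta> + axis i 1) = plane_wave w \<alpha> \<theta>" for \<theta> i
  proof -
    have "w \<bullet> (\<theta> + axis i 1) + \<alpha> = (w \<bullet> \<theta> + \<alpha>) + 2 * pi * of_int (m i)"
      by (simp add: assms inner_add_right inner_axis)
    then show ?thesis by (simp only: plane_wave_def cos_add cos_int_2pin sin_int_2pin) simp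
  qed
  then show ?thesis by (simp add: theta_periodic_def)
qed

text \<open>Evaluating \<open>Z \<circ> \<Lambda> = \<Lambda> \<circ> Z\<close> at \<open>(\<theta>, r0)\<close> on \<open>cos (w \<bullet> \<theta> + \<alpha>) (r - r0)^K\<close> isolates the
  \<open>Z\<close>-derivatives of the coefficients \<open>C (I, K)\<close>; all other contributions carry the factor
  \<open>\<partial>\<^sup>J (a\<^sub>i h) - a\<^sub>i \<partial>\<^sup>J h\<close> at \<open>r0\<close>.\<close>

lemma Zop_coeff_wave_identity:
  fixes a :: "'p::{finite,linorder} \<Rightarrow> (real, 'q::{finite,linorder}) vec \<Rightarrow> real"
    and S :: "(('p \<Rightarrow> nat) \<times> ('q \<Rightarrow> nat)) set"
    and C :: "('p \<Rightarrow> nat) \<times> ('q \<Rightarrow> nat) \<Rightarrow> (real, 'p) vec \<times> (real, 'q) vec \<Rightarrow> real"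
  assumes B: "open B" "r0 \<in> B" and a_smooth: "\<And>i. smooth_on B (a i)"
    and S_fin: "finite S" and C_smooth: "\<And>IJ. IJ \<in> S \<Longrightarrow> smooth_on (UNIV \<times> B) (C IJ)"
    and commute: "\<And>g. smooth_on (UNIV \<times> B) g \<Longrightarrow> theta_periodic g \<Longrightarrow>
        \<forall>x \<in> UNIV \<times> B. Zop a (Lop S C g) x = Lop S C (Zop a g) x"
    and w: "w = (\<chi> i. 2 * pi * of_int (m i))"
  shows "(\<Prod>j\<in>UNIV. fact (K j)) * (\<Sum>I\<in>{I. (I, K) \<in> S}. Zop a (C (I, K)) (\<theta>, r0)
            * multi_power w I * plane_wave w (\<alpha> + real (multi_degree I) * (pi / 2)) \<theta>)
       = (\<Sum>(I, J)\<in>S. C (I, J) (\<theta>, r0) * multi_power w I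
            * plane_wave w (\<alpha> + real (Suc (multi_degree I)) * (pi / 2)) \<theta>
            * (\<Sum>i\<in>UNIV. w $ i * (iterdir (axis_dirs J) (\<lambda>r. a i r * centered_monomial K r0 r) r0
                 - a i r0 * iterdir (axis_dirs J) (centered_monomial K r0) r0)))"
proof -
  define h where "h = centered_monomial K r0"
  define g where "g = (\<lambda>y. plane_wave w \<alpha> (fst y) * h (snd y))"
  define H where "H J = iterdir (axis_dirs J) h r0" for J
  define L where "L i J = iterdir (axis_dirs J) (\<lambda>r. a i r * h r) r0" for i J
  define P0 where "P0 I = multi_power w I * plane_wave w (\<alpha> + real (multi_degree I) * (pi / 2)) \<theta>" for I
  define P1 where "P1 I = multi_power w I * plane_wave w (\<alpha> + real (Suc (multi_degree I)) * (pi / 2)) \<theta>" for I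
  have h_smooth: "smooth_on B h"
    unfolding h_def by (rule smooth_on_subset[OF smooth_on_centered_monomial]) simp
  have "smooth_on (UNIV \<times> B) g"
    unfolding g_def by (rule smooth_on_tensor[OF B(1) smooth_on_plane_wave h_smooth])
  moreover have "theta_periodic g"
    unfolding g_def by (rule theta_periodic_plane_wave_tensor[OF w])
  ultimately have comm: "Zop a (Lop S C g) (\<theta>, r0) = Lop S C (Zop a g) (\<theta>, r0)"
    using commute B(2) by blast
  have Z_Lop: "Zop a (Lop S C g) (\<theta>, r0) = (\<Sum>(I, J)\<in>S. (Zop a (C (I, J)) (\<theta>, r0) * iterdir (axis_dirs I) (plane_wave w \<alpha>) \<theta>
          + C (I, J) (\<theta>, r0) * (\<Sum>i\<in>UNIV. a i r0 * dirderiv (axis i 1) (iterdir (axis_dirs I) (plane_wave w \<alpha>)) \<theta>))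
          * iterdir (axis_dirs J) h r0)"
    unfolding g_def by (rule Zop_Lop_tensor[OF B S_fin C_smooth smooth_on_plane_wave h_smooth])
  have "(\<Sum>(I, J)\<in>S. (Zop a (C (I, J)) (\<theta>, r0) * P0 I
          + C (I, J) (\<theta>, r0) * (\<Sum>i\<in>UNIV. a i r0 * (w $ i * P1 I))) * H J)
      = (\<Sum>(I, J)\<in>S. C (I, J) (\<theta>, r0) * (\<Sum>i\<in>UNIV. w $ i * P1 I * L i J))"
    using comm[unfolded Z_Lop] unfolding g_def Lop_Zop_tensor[OF B a_smooth smooth_on_plane_wave h_smooth]
    by (simp add: H_def L_def P0_def P1_def iterdir_axis_dirs_plane_wave
        dirderiv_iterdir_axis_dirs_plane_wave iterdir_snoc_axis_dirs_plane_wave mult.assoc)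
  then have "(\<Sum>(I, J)\<in>S. Zop a (C (I, J)) (\<theta>, r0) * P0 I * H J)
      = (\<Sum>(I, J)\<in>S. C (I, J) (\<theta>, r0) * P1 I * (\<Sum>i\<in>UNIV. w $ i * (L i J - a i r0 * H J)))"
    by (simp add: split_def sum.distrib sum_distrib_left sum_distrib_right sum_subtractf
        algebra_simps)
  moreover have "(\<Sum>(I, J)\<in>S. Zop a (C (I, J)) (\<theta>, r0) * P0 I * H J)
      = (\<Prod>j\<in>UNIV. fact (K j)) * (\<Sum>I\<in>{I. (I, K) \<in> S}. Zop a (C (I, K)) (\<theta>, r0) * P0 I)"
    unfolding H_def h_def by (rule sum_mult_iterdir_axis_dirs_centered_monomial[OF S_fin])
  ultimately show ?thesis by (simp add: P0_def P1_def L_def H_def h_def mult.assoc)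
qed

lemma Zop_coeff_wave_sum_theta_invariant:
  fixes a :: "'p::{finite,linorder} \<Rightarrow> (real, 'q::{finite,linorder}) vec \<Rightarrow> real"
    and S :: "(('p \<Rightarrow> nat) \<times> ('q \<Rightarrow> nat)) set"
    and C :: "('p \<Rightarrow> nat) \<times> ('q \<Rightarrow> nat) \<Rightarrow> (real, 'p) vec \<times> (real, 'q) vec \<Rightarrow> real"
  assumes B: "open B" "r0 \<in> B" and a_smooth: "\<And>i. smooth_on B (a i)"
    and S_fin: "finite S" and C_smooth: "\<And>IJ. IJ \<in> S \<Longrightarrow> smooth_on (UNIV \<times> B) (C IJ)"
    and commute: "\<And>g. smooth_on (UNIV \<times> B) g \<Longrightarrow> theta_periodic g \<Longrightarrow>
        \<forall>x \<in> UNIV \<times> B. Zop a (Lop S C g) x = Lop S C (Zop a g) x"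
    and above: "\<And>I J \<theta>. (I, J) \<in> S \<Longrightarrow> K < J \<Longrightarrow> C (I, J) (\<theta>, r0) = C (I, J) (0, r0)"
    and w: "w = (\<chi> i. 2 * pi * of_int (m i))"
  shows "(\<Sum>I\<in>{I. (I, K) \<in> S}. Zop a (C (I, K)) (\<theta>, r0) * multi_power w I
            * cos (\<beta> + real (multi_degree I) * (pi / 2)))
       = (\<Sum>I\<in>{I. (I, K) \<in> S}. Zop a (C (I, K)) (0, r0) * multi_power w I
            * cos (\<beta> + real (multi_degree I) * (pi / 2)))"
proof -
  note identity = Zop_coeff_wave_identity[OF B a_smooth S_fin C_smooth commute w, where K = K]
  have shift: "plane_wave w (\<beta> - w \<bullet> \<theta> + c) \<theta> = cos (\<beta> + c)" "plane_wave w (\<beta> + c) 0 = cos (\<beta> + c)" for c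
    by (simp_all add: plane_wave_def algebra_simps)
  have "C (I, J) (\<theta>, r0) * (\<Sum>i\<in>UNIV. w $ i * (iterdir (axis_dirs J) (\<lambda>r. a i r * centered_monomial K r0 r) r0
          - a i r0 * iterdir (axis_dirs J) (centered_monomial K r0) r0))
      = C (I, J) (0, r0) * (\<Sum>i\<in>UNIV. w $ i * (iterdir (axis_dirs J) (\<lambda>r. a i r * centered_monomial K r0 r) r0
          - a i r0 * iterdir (axis_dirs J) (centered_monomial K r0) r0))" if "(I, J) \<in> S" for I J
    using above[OF that] iterdir_axis_dirs_mult_centered_monomial[OF B a_smooth] by (cases "K < J") auto
  then have "(\<Prod>j\<in>UNIV. fact (K j)) * (\<Sum>I\<in>{I. (I, K) \<in> S}. Zop a (C (I, K)) (\<theta>, r0) * multi_power w I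
            * cos (\<beta> + real (multi_degree I) * (pi / 2)))
      = (\<Prod>j\<in>UNIV. fact (K j)) * (\<Sum>I\<in>{I. (I, K) \<in> S}. Zop a (C (I, K)) (0, r0) * multi_power w I
            * cos (\<beta> + real (multi_degree I) * (pi / 2)))"
    using identity[where \<theta> = \<theta> and \<alpha> = "\<beta> - w \<bullet> \<theta>"] identity[where \<theta> = 0 and \<alpha> = \<beta>]
    by (simp only: shift) (auto simp: mult_ac intro!: sum.cong)
  then show ?thesis by simp
qed

lemma Zop_coeff_eq_0:
  fixes a :: "'p::{finite,linorder} \<Rightarrow> (real, 'q::{finite,linorder}) vec \<Rightarrow> real"
    and S :: "(('p \<Rightarrow> nat) \<times> ('q \<Rightarrow> nat)) set"
    and C :: "('p \<Rightarrow> nat) \<times> ('q \<Rightarrow> nat) \<Rightarrow> (real, 'p) vec \<times> (real, 'q) vec \<Rightarrow> real"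
  assumes B: "open B" "r0 \<in> B" and a_smooth: "\<And>i. smooth_on B (a i)"
    and S_fin: "finite S" and C_smooth: "\<And>IJ. IJ \<in> S \<Longrightarrow> smooth_on (UNIV \<times> B) (C IJ)"
    and C_per: "\<And>IJ. IJ \<in> S \<Longrightarrow> theta_periodic (C IJ)"
    and commute: "\<And>g. smooth_on (UNIV \<times> B) g \<Longrightarrow> theta_periodic g \<Longrightarrow>
        \<forall>x \<in> UNIV \<times> B. Zop a (Lop S C g) x = Lop S C (Zop a g) x"
    and above: "\<And>I J \<theta>. (I, J) \<in> S \<Longrightarrow> K < J \<Longrightarrow> C (I, J) (\<theta>, r0) = C (I, J) (0, r0)"
    and IK: "(I0, K) \<in> S"
  shows "Zop a (C (I0, K)) (\<theta>0, r0) = 0"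
proof -
  have diff: "C (I0, K) differentiable (at (\<theta>, r0))" for \<theta>
    using smooth_on_imp_differentiable[OF C_smooth[OF IK] open_Times[OF open_UNIV B(1)]] B(2) by simp
  have "Zop a (C (I0, K)) (\<theta>, r0) - Zop a (C (I0, K)) (0, r0) = 0" for \<theta>
  proof (rule wave_coeffs_zero[where F = "{I. (I, K) \<in> S}"])
    show "finite {I. (I, K) \<in> S}"
      using finite_imageI[OF S_fin, of fst] by (rule finite_subset[rotated]) force
    show "I0 \<in> {I. (I, K) \<in> S}" using IK by simp
    fix m :: "'p \<Rightarrow> int" and \<beta>
    show "(\<Sum>I\<in>{I. (I, K) \<in> S}. (Zop a (C (I, K)) (\<theta>, r0) - Zop a (C (I, K)) (0, r0))
        * multi_power (\<chi> i. 2 * pi * of_int (m i)) I * cos (\<beta> + real (multi_degree I) * (pi / 2))) = 0"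
      using Zop_coeff_wave_sum_theta_invariant[OF B a_smooth S_fin C_smooth commute above refl, where m = m and \<theta> = \<theta> and \<beta> = \<beta>]
      by (simp add: algebra_simps sum_subtractf)
  qed
  then have "dirderiv (\<chi> i. a i r0) (\<lambda>\<theta>. C (I0, K) (\<theta>, r0)) \<theta> = Zop a (C (I0, K)) (0, r0)" for \<theta>
    using Zop_eq_dirderiv[OF diff] by simp
  from unit_periodic_dirderiv_const(1)[OF differentiable_at_Pair_left[OF diff] _ this]
  have "Zop a (C (I0, K)) (0, r0) = 0"
    using C_per[OF IK] by (simp add: theta_periodic_iff)
  with \<open>Zop a (C (I0, K)) (\<theta>0, r0) - Zop a (C (I0, K)) (0, r0) = 0\<close> show ?thesis by simp
qed

lemma finite_downward_induct [consumes 2, case_names step]: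
  fixes T :: "'a::order set"
  assumes "finite T" "x \<in> T"
    and step: "\<And>x. x \<in> T \<Longrightarrow> (\<And>y. y \<in> T \<Longrightarrow> x < y \<Longrightarrow> P y) \<Longrightarrow> P x"
  shows "P x"
proof (rule ccontr)
  assume "\<not> P x"
  then obtain m where m: "m \<in> T" "\<not> P m" and max: "\<And>y. y \<in> T \<Longrightarrow> \<not> P y \<Longrightarrow> m \<le> y \<Longrightarrow> m = y"
    using finite_has_maximal[of "{x \<in> T. \<not> P x}"] assms(1,2) by force
  have "P m" by (rule step[OF m(1)]) (use max in \<open>fastforce simp: less_le\<close>)
  with m(2) show False ..
qed

lemma coeff_theta_invariant_if_above:
  fixes a :: "'p::{finite,linorder} \<Rightarrow> (real, 'q::{finite,linorder}) vec \<Rightarrow> real"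
    and S :: "(('p \<Rightarrow> nat) \<times> ('q \<Rightarrow> nat)) set"
    and C :: "('p \<Rightarrow> nat) \<times> ('q \<Rightarrow> nat) \<Rightarrow> (real, 'p) vec \<times> (real, 'q) vec \<Rightarrow> real"
  assumes B: "open B" and a_smooth: "\<And>i. smooth_on B (a i)" and incomm: "incommensurable a B"
    and S_fin: "finite S" and C_smooth: "\<And>IJ. IJ \<in> S \<Longrightarrow> smooth_on (UNIV \<times> B) (C IJ)"
    and C_per: "\<And>IJ. IJ \<in> S \<Longrightarrow> theta_periodic (C IJ)"
    and commute: "\<And>g. smooth_on (UNIV \<times> B) g \<Longrightarrow> theta_periodic g \<Longrightarrow>
        \<forall>x \<in> UNIV \<times> B. Zop a (Lop S C g) x = Lop S C (Zop a g) x"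
    and above: "\<And>I J \<theta> \<theta>' r. (I, J) \<in> S \<Longrightarrow> K < J \<Longrightarrow> r \<in> B \<Longrightarrow> C (I, J) (\<theta>, r) = C (I, J) (\<theta>', r)"
    and IK: "(I, K) \<in> S" and r: "r \<in> B"
  shows "C (I, K) (\<theta>, r) = C (I, K) (\<theta>', r)"
proof (rule theta_invariant_if_Zop_zero[OF B incomm _ _ C_per[OF IK] _ r])
  show "continuous_on B (a i)" for i by (rule smooth_on_imp_continuous_on[OF a_smooth])
  show "C (I, K) differentiable (at (\<theta>, r))" if "r \<in> B" for \<theta> r
    using smooth_on_imp_differentiable[OF C_smooth[OF IK] open_Times[OF open_UNIV B]] that by simp
  show "Zop a (C (I, K)) (\<theta>, r) = 0" if r': "r \<in> B" for \<theta> r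
  proof -
    have above_r: "C (I', J) (\<theta>'', r) = C (I', J) (0, r)" if "(I', J) \<in> S" "K < J" for I' J \<theta>''
      using above[OF that r'] .
    show ?thesis by (rule Zop_coeff_eq_0[OF B r' a_smooth S_fin C_smooth C_per commute above_r IK])
  qed
qed

theorem mainTheorem10:
  fixes a :: "'p::{finite,linorder} \<Rightarrow> (real, 'q::{finite,linorder}) vec \<Rightarrow> real"
    and c :: "(real, 'q) vec" and \<rho> :: real
    and S :: "(('p \<Rightarrow> nat) \<times> ('q \<Rightarrow> nat)) set"
    and C :: "('p \<Rightarrow> nat) \<times> ('q \<Rightarrow> nat) \<Rightarrow> (real, 'p) vec \<times> (real, 'q) vec \<Rightarrow> real"
  assumes rho: "\<rho> > 0"
    and a_smooth: "\<And>i. smooth_on (ball c \<rho>) (a i)"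
    and incomm: "incommensurable a (ball c \<rho>)"
    and S_fin: "finite S"
    and C_smooth: "\<And>IJ. IJ \<in> S \<Longrightarrow> smooth_on (UNIV \<times> ball c \<rho>) (C IJ)"
    and C_per: "\<And>IJ. IJ \<in> S \<Longrightarrow> theta_periodic (C IJ)"
    and commute: "\<And>g. smooth_on (UNIV \<times> ball c \<rho>) g \<Longrightarrow> theta_periodic g \<Longrightarrow>
        \<forall>x \<in> UNIV \<times> ball c \<rho>. Zop a (Lop S C g) x = Lop S C (Zop a g) x"
  shows "\<forall>IJ \<in> S. \<forall>\<theta> \<theta>' r. r \<in> ball c \<rho> \<longrightarrow> C IJ (\<theta>, r) = C IJ (\<theta>', r)"
proof -
  have "\<forall>I \<theta> \<theta>' r. (I, K) \<in> S \<longrightarrow> r \<in> ball c \<rho> \<longrightarrow> C (I, K) (\<theta>, r) = C (I, K) (\<theta>', r)"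
    if "K \<in> snd ` S" for K
    using finite_imageI[OF S_fin] that
  proof (induction K rule: finite_downward_induct)
    case (step K)
    have "C (I, J) (\<theta>, r) = C (I, J) (\<theta>', r)" if "(I, J) \<in> S" "K < J" "r \<in> ball c \<rho>" for I J \<theta> \<theta>' r
      using step.IH[of J] that by force
    then show ?case
      using coeff_theta_invariant_if_above[OF open_ball a_smooth incomm S_fin C_smooth C_per commute] by blast
  qed
  then show ?thesis by force
qed

end
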